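(* Let $k\le -1$, $w^+=W_v(T_k^0)$ and $w^-=0$, and suppose $W_k(T_n^0;w^+)=W_k(T_n^0;w^-)$ for some $n$ with $k\le n\le-1$. Then $W_k(T_m^0;w^+)=W(m)=W_k(T_m^0;w^-)$ for all $m\ge n$. Moreover, for all $t\ge T_n^0+W_k^{(1)}(T_n^0;w^+)$, \[ Z_{T_k^0}\big(t-T_k^0;\,Q_v(T_k^0),\,\mathcal{S}(U(T_k^0)),\,0\big)=Z_{T_k^0}\big(t-T_k^0;0,0,0\big)=Z(t).\]
   Context: Let $c\ge1$. Let $G,F$ be CDFs of strictly positive random variables $A$ (interarrival) and $V$ (service), $\lambda=1/E[A]$, $\mu=1/E[V]$, $\lambda<c\mu$. Let $\mathcal{T}^0=\{T_n^0:n\in\mathbb{Z}\setminus\{0\}\}$ be a time-stationary renewal point process with inter-renewal CDF $G$, indexed $\dots<T_{-1}^0<0<T_1^0<\dots$ (indices ordered naturally); $T_n^{0,+}$ is the next point after $T_n^0$, $A_n=T_n^{0,+}-T_n^0$. Let $\mathcal{T}^i=\{T_n^i\}$, $i=1,\dots,c$, be i.i.d. time-stationary renewal processes with inter-renewal CDF $F$, independent of $\mathcal{T}^0$; $V_k^i=T_k^{i,+}-T_k^i$. $U^i(t)=\inf\{T_n^i:T_n^i>t\}-t$, $U(t)=(U^1(t),\dots,U^c(t))$, $U(s_-)$ its left limit. $\mathcal{S}$ sorts ascending; $x^+$ componentwise positive part; $\mathbf{1}=(1,\dots,1)$, $\mathbf{e}_1=(1,0,\dots,0)$. Vacation system: customers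 arrive at the points of $\mathcal{T}^0$ and wait in a FCFS queue; at each point $T_k^i$, if the queue is nonempty just before, the head customer leaves the queue and is served by server $i$ for time $V_k^i$, otherwise server $i$ takes a vacation of length $V_k^i$. Stationary queue length $Q_v(t)=\sup_{s\le t}\big(|(s,t]\cap\mathcal{T}^0|-\sum_i|(s,t]\cap\mathcal{T}^i|\big)$. $D_n^0$ is the delay of the customer arriving at $T_n^0$; he leaves the queue at a point $T_k^{i(n)}=T_n^0+D_n^0$ and his service time is $V_n:=V_k^{i(n)}$. $W_v(T_n^0)=D_n^0\mathbf{1}+\mathcal{S}(U((T_n^0+D_n^0)_-))$. For $k\le n$ and nonnegative ascending $w\in\mathbb{R}^c$: $W_k(T_k^0;w)=w$, $W_k(T_n^{0,+};w)=\mathcal{S}\big((W_k(T_n^0;w)+V_n\mathbf{e}_1-A_n\mathbf{1})^+\big)$; $W_k^{(1)}$ is the first entry; $W(n)=\lim_{k\to-\infty}W_k(T_n^0;0)$. For $u\in\mathbb{R}$ and $z=(q,r,e)$, $Z_u(t;z)$ is the state at time $u+t$ (number waiting in queue, ascending vector of remaining service times at the $c$ servers, time since last arrival) of a FCFS $c$-server queue started at time $u$ in state $z$ and fed by the customers arriving at $T_n^0\in(u,u+t]$ with service times $V_n$. $Z(t)=\lim_{u\to-\infty}Z_u(t-u;(0,0,e_u))$, $e_u=u-\sup\{T_n^0:T_n^0\le u\}$ (this limit exists a.s.). *)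

theory Defs
  imports "HOL-Analysis.Analysis"
begin

text \<open>A point process indexed by the integers without 0 is a function
  int => real whose value at index 0 is ignored. Arrivals: T0; servers: T i, i in {1..c}.
  Vectors in R^c are functions nat => real with entries 0..c-1 (entry j is server j+1),
  all other entries 0.\<close>

definition nxt :: "int \<Rightarrow> int" where
  "nxt n = (if n = -1 then 1 else n + 1)"

text \<open>ordinal of a nonzero index (bijection from int-{0} onto int) and its inverse\<close>
definition ordi :: "int \<Rightarrow> int" where
  "ordi n = (if n < 0 then n else n - 1)"

definition idx :: "int \<Rightarrow> int" where
  "idx j = (if j < 0 then j else j + 1)"

text \<open>regularity of a sample path (properties holding almost surely in the paper's model)\<close>
definition point_seq :: "(int \<Rightarrow> real) \<Rightarrow> bool" where
  "point_seq P \<longleftrightarrow>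
     (\<forall>m n. m \<noteq> 0 \<longrightarrow> n \<noteq> 0 \<longrightarrow> m < n \<longrightarrow> P m < P n) \<and>
     P (-1) < 0 \<and> 0 < P 1 \<and>
     filterlim P at_top at_top \<and> filterlim P at_bot at_bot"

definition cnt :: "(int \<Rightarrow> real) \<Rightarrow> real \<Rightarrow> real \<Rightarrow> nat" where
  "cnt P s t = card {n. n \<noteq> 0 \<and> s < P n \<and> P n \<le> t}"

definition qv_set :: "nat \<Rightarrow> (int \<Rightarrow> real) \<Rightarrow> (nat \<Rightarrow> int \<Rightarrow> real) \<Rightarrow> real \<Rightarrow> int set" where
  "qv_set c T0 T t =
     {int (cnt T0 s t) - (\<Sum>i\<in>{1..c}. int (cnt (T i) s t)) | s. s \<le> t}"

text \<open>stationary queue length of the vacation system\<close>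
definition Qv :: "nat \<Rightarrow> (int \<Rightarrow> real) \<Rightarrow> (nat \<Rightarrow> int \<Rightarrow> real) \<Rightarrow> real \<Rightarrow> nat" where
  "Qv c T0 T t = nat (Sup (qv_set c T0 T t))"

text \<open>time T_n^0 + D_n^0 at which customer n leaves the queue (FCFS): the Qv(T_n^0)-th
  service epoch after T_n^0\<close>
definition dep :: "nat \<Rightarrow> (int \<Rightarrow> real) \<Rightarrow> (nat \<Rightarrow> int \<Rightarrow> real) \<Rightarrow> int \<Rightarrow> real" where
  "dep c T0 T n = (THE x. (\<exists>i\<in>{1..c}. \<exists>m. m \<noteq> 0 \<and> T i m = x) \<and> T0 n < x \<and>
      (\<Sum>i\<in>{1..c}. cnt (T i) (T0 n) x) = Qv c T0 T (T0 n))"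

definition D :: "nat \<Rightarrow> (int \<Rightarrow> real) \<Rightarrow> (nat \<Rightarrow> int \<Rightarrow> real) \<Rightarrow> int \<Rightarrow> real" where
  "D c T0 T n = dep c T0 T n - T0 n"

definition srv :: "nat \<Rightarrow> (int \<Rightarrow> real) \<Rightarrow> (nat \<Rightarrow> int \<Rightarrow> real) \<Rightarrow> int \<Rightarrow> nat \<times> int" where
  "srv c T0 T n = (THE (i, m). i \<in> {1..c} \<and> m \<noteq> 0 \<and> T i m = dep c T0 T n)"

definition Vs :: "nat \<Rightarrow> (int \<Rightarrow> real) \<Rightarrow> (nat \<Rightarrow> int \<Rightarrow> real) \<Rightarrow> int \<Rightarrow> real" where
  "Vs c T0 T n = (case srv c T0 T n of (i, m) \<Rightarrow> T i (nxt m) - T i m)"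

definition Aint :: "(int \<Rightarrow> real) \<Rightarrow> int \<Rightarrow> real" where
  "Aint T0 n = T0 (nxt n) - T0 n"

definition U :: "(nat \<Rightarrow> int \<Rightarrow> real) \<Rightarrow> nat \<Rightarrow> real \<Rightarrow> real" where
  "U T i t = Inf {T i m | m. m \<noteq> 0 \<and> T i m > t} - t"

definition Uleft :: "(nat \<Rightarrow> int \<Rightarrow> real) \<Rightarrow> nat \<Rightarrow> real \<Rightarrow> real" where
  "Uleft T i s = Lim (at_left s) (\<lambda>x. U T i x)"

definition Uvec :: "nat \<Rightarrow> (nat \<Rightarrow> int \<Rightarrow> real) \<Rightarrow> real \<Rightarrow> nat \<Rightarrow> real" where
  "Uvec c T t = (\<lambda>j. if j < c then U T (j + 1) t else 0)"

definition Uvec_left :: "nat \<Rightarrow> (nat \<Rightarrow> int \<Rightarrow> real) \<Rightarrow> real \<Rightarrow> nat \<Rightarrow> real" where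
  "Uvec_left c T s = (\<lambda>j. if j < c then Uleft T (j + 1) s else 0)"

definition vsort :: "nat \<Rightarrow> (nat \<Rightarrow> real) \<Rightarrow> nat \<Rightarrow> real" where
  "vsort c x = (\<lambda>i. if i < c then sort (map x [0..<c]) ! i else 0)"

definition vpos :: "(nat \<Rightarrow> real) \<Rightarrow> nat \<Rightarrow> real" where
  "vpos x = (\<lambda>i. max (x i) 0)"

definition one :: "nat \<Rightarrow> nat \<Rightarrow> real" where
  "one c = (\<lambda>i. if i < c then 1 else 0)"

definition e1 :: "nat \<Rightarrow> real" where
  "e1 = (\<lambda>i. if i = 0 then 1 else 0)"

definition zerov :: "nat \<Rightarrow> real" where
  "zerov = (\<lambda>i. 0)"

definition Wv :: "nat \<Rightarrow> (int \<Rightarrow> real) \<Rightarrow> (nat \<Rightarrow> int \<Rightarrow> real) \<Rightarrow> int \<Rightarrow> nat \<Rightarrow> real" where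
  "Wv c T0 T n = (\<lambda>i. D c T0 T n * one c i + vsort c (Uvec_left c T (dep c T0 T n)) i)"

definition kw_step :: "nat \<Rightarrow> real \<Rightarrow> real \<Rightarrow> (nat \<Rightarrow> real) \<Rightarrow> nat \<Rightarrow> real" where
  "kw_step c v a w = vsort c (vpos (\<lambda>i. w i + v * e1 i - a * one c i))"

text \<open>Wseq k w j = W_k(T_{n}^0; w) where n is the j-th index after k\<close>
primrec Wseq :: "nat \<Rightarrow> (int \<Rightarrow> real) \<Rightarrow> (nat \<Rightarrow> int \<Rightarrow> real) \<Rightarrow> int \<Rightarrow> (nat \<Rightarrow> real) \<Rightarrow> nat \<Rightarrow> nat \<Rightarrow> real" where
  "Wseq c T0 T k w 0 = w"
| "Wseq c T0 T k w (Suc j) =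
     kw_step c (Vs c T0 T (idx (ordi k + int j))) (Aint T0 (idx (ordi k + int j))) (Wseq c T0 T k w j)"

text \<open>W_k(T_n^0; w), for k \<le> n\<close>
definition Wk :: "nat \<Rightarrow> (int \<Rightarrow> real) \<Rightarrow> (nat \<Rightarrow> int \<Rightarrow> real) \<Rightarrow> int \<Rightarrow> int \<Rightarrow> (nat \<Rightarrow> real) \<Rightarrow> nat \<Rightarrow> real" where
  "Wk c T0 T k n w = Wseq c T0 T k w (nat (ordi n - ordi k))"

definition Wlim :: "nat \<Rightarrow> (int \<Rightarrow> real) \<Rightarrow> (nat \<Rightarrow> int \<Rightarrow> real) \<Rightarrow> int \<Rightarrow> nat \<Rightarrow> real" where
  "Wlim c T0 T n = Lim at_bot (\<lambda>k. Wk c T0 T k n zerov)"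

text \<open>Customers of the system: the q most recent arrivals at or before u (initially waiting),
  followed by all later arrivals; if q = 0 the first customer is the first arrival at or after u.\<close>
definition zfirst :: "(int \<Rightarrow> real) \<Rightarrow> real \<Rightarrow> nat \<Rightarrow> int" where
  "zfirst T0 u q =
    (if q = 0 then (THE j. j \<noteq> 0 \<and> u \<le> T0 j \<and> (\<forall>m. m \<noteq> 0 \<longrightarrow> m < j \<longrightarrow> T0 m < u))
     else idx (ordi (THE j. j \<noteq> 0 \<and> T0 j \<le> u \<and> (\<forall>m. m \<noteq> 0 \<longrightarrow> j < m \<longrightarrow> u < T0 m)) - int q + 1))"

definition zcust :: "(int \<Rightarrow> real) \<Rightarrow> real \<Rightarrow> nat \<Rightarrow> nat \<Rightarrow> int" where
  "zcust T0 u q j = idx (ordi (zfirst T0 u q) + int j)"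

text \<open>effective arrival time (initially waiting customers count as present at u)\<close>
definition zarr :: "(int \<Rightarrow> real) \<Rightarrow> real \<Rightarrow> nat \<Rightarrow> nat \<Rightarrow> real" where
  "zarr T0 u q j = max (T0 (zcust T0 u q j)) u"

text \<open>ascending list of the absolute times at which the c servers become free, as seen by
  the j-th customer\<close>
primrec zfree :: "nat \<Rightarrow> (int \<Rightarrow> real) \<Rightarrow> (nat \<Rightarrow> int \<Rightarrow> real) \<Rightarrow> real \<Rightarrow> nat \<Rightarrow> (nat \<Rightarrow> real) \<Rightarrow> nat \<Rightarrow> real list" where
  "zfree c T0 T u q r 0 = sort (map (\<lambda>i. u + r i) [0..<c])"
| "zfree c T0 T u q r (Suc j) =
     insort (max (zarr T0 u q j) (hd (zfree c T0 T u q r j)) + Vs c T0 T (zcust T0 u q j))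
            (tl (zfree c T0 T u q r j))"

definition zstart :: "nat \<Rightarrow> (int \<Rightarrow> real) \<Rightarrow> (nat \<Rightarrow> int \<Rightarrow> real) \<Rightarrow> real \<Rightarrow> nat \<Rightarrow> (nat \<Rightarrow> real) \<Rightarrow> nat \<Rightarrow> real" where
  "zstart c T0 T u q r j = max (zarr T0 u q j) (hd (zfree c T0 T u q r j))"

definition zend :: "nat \<Rightarrow> (int \<Rightarrow> real) \<Rightarrow> (nat \<Rightarrow> int \<Rightarrow> real) \<Rightarrow> real \<Rightarrow> nat \<Rightarrow> (nat \<Rightarrow> real) \<Rightarrow> nat \<Rightarrow> real" where
  "zend c T0 T u q r j = zstart c T0 T u q r j + Vs c T0 T (zcust T0 u q j)"

text \<open>Z_u(t; (q, r, e)): (number waiting, ascending vector of remaining service times,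
  time since last arrival) at time u + t\<close>
definition Zu :: "nat \<Rightarrow> (int \<Rightarrow> real) \<Rightarrow> (nat \<Rightarrow> int \<Rightarrow> real) \<Rightarrow> real \<Rightarrow> real \<Rightarrow>
    nat \<times> (nat \<Rightarrow> real) \<times> real \<Rightarrow> nat \<times> (nat \<Rightarrow> real) \<times> real" where
  "Zu c T0 T u t z = (case z of (q, r, e) \<Rightarrow>
     (let x = u + t;
          N = card {j. zarr T0 u q j \<le> x};
          R = sort (map (\<lambda>i. u + r i - x) (filter (\<lambda>i. x < u + r i) [0..<c]) @
                    map (\<lambda>j. zend c T0 T u q r j - x)
                      (filter (\<lambda>j. zstart c T0 T u q r j \<le> x \<and> x < zend c T0 T u q r j) [0..<N]))
      in (card {j. zarr T0 u q j \<le> x \<and> x < zstart c T0 T u q r j},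
          (\<lambda>i. if i < c then (replicate (c - length R) 0 @ R) ! i else 0),
          (if (\<exists>n. n \<noteq> 0 \<and> u < T0 n \<and> T0 n \<le> x)
           then x - Sup {T0 n | n. n \<noteq> 0 \<and> T0 n \<le> x} else e + t))))"

definition Zlim :: "nat \<Rightarrow> (int \<Rightarrow> real) \<Rightarrow> (nat \<Rightarrow> int \<Rightarrow> real) \<Rightarrow> real \<Rightarrow> nat \<times> (nat \<Rightarrow> real) \<times> real" where
  "Zlim c T0 T t = Lim at_bot (\<lambda>u. Zu c T0 T u (t - u)
      (0, zerov, u - Sup {T0 n | n. n \<noteq> 0 \<and> T0 n \<le> u}))"

end

theory Submission
  imports Defs "HOL-Combinatorics.Multiset_Permutations"
begin

text \<open>
One Kiefer--Wolfowitz step from the vacation workload W_v(T_m^0) stays below W_v(T_{m+1}^0):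
after serving customer m, every server becomes free no later than its next service epoch. By
monotonicity of the Kiefer--Wolfowitz map, a recursion started empty at any index k' <= k is
squeezed at index k between 0 and W_v(T_k^0), hence at index n between the two recursions from k,
which coincide there; so all of them agree from n on, and this identifies the limit W(m).

The multi-server queue is driven by the same recursion: the workload vector seen by an arriving
customer is the sorted excess of the servers' free times over his arrival time. The queue started
in the vacation state (Q_v, S(U), 0) at T_k^0 presents W_v(T_k^0) to customer k, since the
customers initially waiting are served exactly at the service epochs of the vacation system, and
an empty queue started at any u <= T_k^0 presents the empty-start recursion. Two queues presenting
the same workload to customer n and serving the same customers afterwards are in the same state
once customer n has entered service, that is from T_n^0 + W^(1) on.
\<close>

section \<open>Integer indices and point sequences\<close>

lemma ordi_idx[simp]: "ordi (idx j) = j"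
  by (simp add: ordi_def idx_def)

lemma idx_ordi[simp]: "n \<noteq> 0 \<Longrightarrow> idx (ordi n) = n"
  by (simp add: ordi_def idx_def)

lemma idx_nz[simp]: "idx j \<noteq> 0"
  by (simp add: idx_def)

lemma idx_less_iff[simp]: "idx i < idx j \<longleftrightarrow> i < j"
  by (auto simp: idx_def)

lemma idx_eq_iff[simp]: "idx i = idx j \<longleftrightarrow> i = j"
  by (auto simp: idx_def)

lemma nxt_idx[simp]: "nxt (idx j) = idx (j+1)"
  by (simp add: nxt_def idx_def)

lemma ordi_mono: "m \<noteq> 0 \<Longrightarrow> n \<noteq> 0 \<Longrightarrow> m \<le> n \<Longrightarrow> ordi m \<le> ordi n"
  by (simp add: ordi_def)

lemma ordi_neg: "k < 0 \<Longrightarrow> ordi k = k" by (simp add: ordi_def)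

lemma idx_neg: "k < 0 \<Longrightarrow> idx k = k" by (simp add: idx_def)

definition unbounded_strict_mono :: "(int \<Rightarrow> real) \<Rightarrow> bool" where
  "unbounded_strict_mono f \<longleftrightarrow> strict_mono f \<and> (\<forall>t. \<exists>j. t < f j) \<and> (\<forall>t. \<exists>j. f j < t)"

definition reindex :: "(int \<Rightarrow> real) \<Rightarrow> int \<Rightarrow> real" where
  "reindex P j = P (idx j)"

lemma point_seq_reindex:
  assumes "point_seq P" shows "unbounded_strict_mono (reindex P)"
proof -
  have sm: "strict_mono (reindex P)"
    using assms unfolding point_seq_def strict_mono_def reindex_def by auto
  have "\<forall>t. \<exists>j. t < reindex P j"
  proof
    fix t
    from assms have "filterlim P at_top at_top" by (simp add: point_seq_def)
    then have "eventually (\<lambda>n. P n \<ge> t + 1) at_top" by (simp add: filterlim_at_top)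
    then obtain N where N: "\<And>n. n \<ge> N \<Longrightarrow> P n \<ge> t + 1" by (auto simp: eventually_at_top_linorder)
    have "P (idx (max N 1)) \<ge> t + 1" by (rule N) (auto simp: idx_def)
    then show "\<exists>j. t < reindex P j" unfolding reindex_def by (intro exI[of _ "max N 1"]) auto
  qed
  moreover have "\<forall>t. \<exists>j. reindex P j < t"
  proof
    fix t
    from assms have "filterlim P at_bot at_bot" by (simp add: point_seq_def)
    then have "eventually (\<lambda>n. P n \<le> t - 1) at_bot" by (simp add: filterlim_at_bot)
    then obtain N where N: "\<And>n. n \<le> N \<Longrightarrow> P n \<le> t - 1" by (auto simp: eventually_at_bot_linorder)
    have "P (idx (min N (-1))) \<le> t - 1" by (rule N) (auto simp: idx_def)
    then show "\<exists>j. reindex P j < t" unfolding reindex_def by (intro exI[of _ "min N (-1)"]) auto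
  qed
  ultimately show ?thesis using sm by (simp add: unbounded_strict_mono_def)
qed

definition floor_index :: "(int \<Rightarrow> real) \<Rightarrow> real \<Rightarrow> int" where
  "floor_index f t = (THE j. f j \<le> t \<and> t < f (j+1))"

lemma strict_mono_bracket:
  fixes f :: "int \<Rightarrow> real"
  assumes "strict_mono f" "f j0 \<le> t"
  shows "t < f (j0 + int d) \<Longrightarrow> \<exists>j. f j \<le> t \<and> t < f (j+1)"
proof (induction d)
  case 0 then show ?case using assms by simp
next
  case (Suc d)
  show ?case
  proof (cases "t < f (j0 + int d)")
    case True then show ?thesis using Suc by blast
  next
    case False
    have "t < f (j0 + int d + 1)" using Suc.prems by (simp add: algebra_simps)
    moreover have "f (j0 + int d) \<le> t" using False by linarith
    ultimately show ?thesis by blast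
  qed
qed

lemma floor_index_spec:
  assumes "unbounded_strict_mono f" shows "f (floor_index f t) \<le> t \<and> t < f (floor_index f t + 1)"
proof -
  from assms obtain j0 where j0: "f j0 < t" by (auto simp: unbounded_strict_mono_def)
  from assms obtain j1 where j1: "t < f j1" by (auto simp: unbounded_strict_mono_def)
  have sm: "strict_mono f" using assms by (simp add: unbounded_strict_mono_def)
  have "j0 < j1" using j0 j1 sm by (metis less_trans not_less_iff_gr_or_eq strict_mono_less)
  then have "j1 = j0 + int (nat (j1 - j0))" by simp
  then have ex: "\<exists>j. f j \<le> t \<and> t < f (j+1)" using strict_mono_bracket[OF sm, of j0 t "nat (j1 - j0)"] j0 j1 by auto
  have uniq: "j = j'" if "f j \<le> t \<and> t < f (j+1)" "f j' \<le> t \<and> t < f (j'+1)" for j j'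
  proof (rule ccontr)
    assume "j \<noteq> j'"
    then consider "j + 1 \<le> j'" | "j' + 1 \<le> j" by linarith
    then show False
    proof cases
      case 1 then have "f (j+1) \<le> f j'" using sm by (simp add: strict_mono_less_eq)
      then show False using that by linarith
    next
      case 2 then have "f (j'+1) \<le> f j" using sm by (simp add: strict_mono_less_eq)
      then show False using that by linarith
    qed
  qed
  show ?thesis unfolding floor_index_def by (rule theI'[of "\<lambda>j. f j \<le> t \<and> t < f (j+1)"]) (use ex uniq in blast)
qed

lemma floor_index_unique:
  assumes "unbounded_strict_mono f" "f j \<le> t" "t < f (j+1)" shows "floor_index f t = j"
proof -
  have sm: "strict_mono f" using assms by (simp add: unbounded_strict_mono_def)
  note s = floor_index_spec[OF assms(1), of t]
  show ?thesis
  proof (rule ccontr)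
    assume "floor_index f t \<noteq> j"
    then consider "floor_index f t + 1 \<le> j" | "j + 1 \<le> floor_index f t" by linarith
    then show False
    proof cases
      case 1 then have "f (floor_index f t+1) \<le> f j" using sm by (simp add: strict_mono_less_eq)
      then show False using s assms by linarith
    next
      case 2 then have "f (j+1) \<le> f (floor_index f t)" using sm by (simp add: strict_mono_less_eq)
      then show False using s assms by linarith
    qed
  qed
qed

lemma unbounded_le_iff: "unbounded_strict_mono f \<Longrightarrow> f i \<le> f j \<longleftrightarrow> i \<le> j"
  by (simp add: unbounded_strict_mono_def strict_mono_less_eq)

lemma unbounded_less_iff: "unbounded_strict_mono f \<Longrightarrow> f i < f j \<longleftrightarrow> i < j"
  by (simp add: unbounded_strict_mono_def strict_mono_less)

lemma le_floor_index_iff: "unbounded_strict_mono f \<Longrightarrow> j \<le> floor_index f t \<longleftrightarrow> f j \<le> t"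
proof -
  assume p: "unbounded_strict_mono f"
  note s = floor_index_spec[OF p, of t]
  show ?thesis
  proof
    assume "j \<le> floor_index f t" then show "f j \<le> t" using s unbounded_le_iff[OF p] by (meson order_trans)
  next
    assume h: "f j \<le> t"
    show "j \<le> floor_index f t"
    proof (rule ccontr)
      assume "\<not> j \<le> floor_index f t" then have "floor_index f t + 1 \<le> j" by simp
      then have "f (floor_index f t + 1) \<le> f j" using unbounded_le_iff[OF p] by blast
      then show False using s h by linarith
    qed
  qed
qed

lemma floor_index_less_iff: "unbounded_strict_mono f \<Longrightarrow> floor_index f t < j \<longleftrightarrow> t < f j"
  using le_floor_index_iff[of f j t] by (meson not_le)

lemma floor_index_mono: "unbounded_strict_mono f \<Longrightarrow> s \<le> t \<Longrightarrow> floor_index f s \<le> floor_index f t"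
  using le_floor_index_iff floor_index_spec by (meson order_trans)

lemma floor_index_at[simp]: "unbounded_strict_mono f \<Longrightarrow> floor_index f (f j) = j"
  by (rule floor_index_unique) (auto simp: unbounded_less_iff)

lemma card_points_between:
  assumes "unbounded_strict_mono f" "s \<le> t"
  shows "card {j. s < f j \<and> f j \<le> t} = nat (floor_index f t - floor_index f s)"
proof -
  have "{j. s < f j \<and> f j \<le> t} = {floor_index f s + 1 .. floor_index f t}"
  proof (intro set_eqI iffI)
    fix x assume "x \<in> {j. s < f j \<and> f j \<le> t}"
    then show "x \<in> {floor_index f s + 1 .. floor_index f t}"
      using le_floor_index_iff[OF assms(1), of x t] floor_index_less_iff[OF assms(1), of s x] by auto
  next
    fix x assume "x \<in> {floor_index f s + 1 .. floor_index f t}"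
    then show "x \<in> {j. s < f j \<and> f j \<le> t}"
      using le_floor_index_iff[OF assms(1), of x t] floor_index_less_iff[OF assms(1), of s x] by auto
  qed
  then show ?thesis by simp
qed

lemma cnt_eq_floor_index:
  assumes "point_seq P" "s \<le> t"
  shows "cnt P s t = nat (floor_index (reindex P) t - floor_index (reindex P) s)"
proof -
  have "{n. n \<noteq> 0 \<and> s < P n \<and> P n \<le> t} = idx ` {j. s < reindex P j \<and> reindex P j \<le> t}"
  proof (intro set_eqI iffI)
    fix x assume "x \<in> {n. n \<noteq> 0 \<and> s < P n \<and> P n \<le> t}"
    then show "x \<in> idx ` {j. s < reindex P j \<and> reindex P j \<le> t}"
      unfolding reindex_def by (intro image_eqI[of _ _ "ordi x"]) auto
  qed (auto simp: reindex_def)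
  moreover have "inj idx" by (simp add: inj_def)
  ultimately show ?thesis unfolding cnt_def
    by (simp add: card_image inj_on_subset card_points_between[OF point_seq_reindex[OF assms(1)] assms(2)])
qed

lemma int_cnt_eq_floor_index:
  assumes "point_seq P" "s \<le> t"
  shows "int (cnt P s t) = floor_index (reindex P) t - floor_index (reindex P) s"
  using cnt_eq_floor_index[OF assms] floor_index_mono[OF point_seq_reindex[OF assms(1)] assms(2)] by simp



lemma int_Sup_mem:
  fixes A :: "int set" assumes "A \<noteq> {}" "bdd_above A" shows "Sup A \<in> A"
proof (rule ccontr)
  assume "Sup A \<notin> A"
  have "\<forall>x\<in>A. x \<le> Sup A - 1"
  proof
    fix x assume x: "x \<in> A"
    then have "x \<le> Sup A" using cSup_upper[OF _ assms(2)] by blast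
    moreover have "x \<noteq> Sup A" using x \<open>Sup A \<notin> A\<close> by blast
    ultimately show "x \<le> Sup A - 1" by linarith
  qed
  then have "Sup A \<le> Sup A - 1" using cSup_least[OF assms(1)] by blast
  then show False by simp
qed

lemma sort_eq_if_mset_eq: "mset xs = mset ys \<Longrightarrow> sort xs = sort ys"
  by (metis sorted_list_of_multiset_mset)

lemma sort_map_mono:
  fixes f :: "'a::linorder \<Rightarrow> 'b::linorder"
  assumes "mono f" shows "sort (map f xs) = map f (sort xs)"
proof (rule properties_for_sort)
  show "mset (map f (sort xs)) = mset (map f xs)" by simp
  show "sorted (map f (sort xs))"
    by (rule sorted_map_mono) (use assms in \<open>auto simp: mono_on_def mono_def\<close>)
qed

lemma sort_map_sorted:
  fixes f :: "'a::linorder \<Rightarrow> 'b::linorder"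
  assumes "mono f" "sorted xs" shows "sort (map f xs) = map f xs"
  using sort_map_mono[OF assms(1)] assms(2) by (simp add: sorted_sort_id)

definition vec_of_list :: "nat \<Rightarrow> real list \<Rightarrow> nat \<Rightarrow> real" where
  "vec_of_list c L = (\<lambda>i. if i < c then L ! i else 0)"

lemma vsort_eq_vec_of_list: "vsort c x = vec_of_list c (sort (map x [0..<c]))"
  by (simp add: vsort_def vec_of_list_def)

lemma sort_nth_le_if_count:
  fixes xs :: "real list"
  assumes "i < length xs" "i + 1 \<le> length (filter (\<lambda>y. y \<le> v) xs)"
  shows "sort xs ! i \<le> v"
proof (rule ccontr)
  assume h: "\<not> sort xs ! i \<le> v"
  have "{j. j < length (sort xs) \<and> sort xs ! j \<le> v} \<subseteq> {0..<i}"
  proof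
    fix j assume j: "j \<in> {j. j < length (sort xs) \<and> sort xs ! j \<le> v}"
    show "j \<in> {0..<i}"
    proof (rule ccontr)
      assume "j \<notin> {0..<i}"
      then have "i \<le> j" by simp
      then have "sort xs ! i \<le> sort xs ! j" using j by (intro sorted_nth_mono) auto
      then show False using h j by auto
    qed
  qed
  then have "card {j. j < length (sort xs) \<and> sort xs ! j \<le> v} \<le> card {0..<i}"
    by (rule card_mono[OF finite_atLeastLessThan])
  then have "card {j. j < length (sort xs) \<and> sort xs ! j \<le> v} \<le> i" by simp
  moreover have "length (filter (\<lambda>y. y \<le> v) (sort xs)) = length (filter (\<lambda>y. y \<le> v) xs)"
    by (rule mset_eq_length) (simp add: mset_filter)
  ultimately show False using assms(2) by (simp add: length_filter_conv_card)
qed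

lemma sort_nth_mono:
  fixes xs ys :: "real list"
  assumes len: "length xs = length ys" and le: "\<forall>j<length xs. xs ! j \<le> ys ! j" and i: "i < length xs"
  shows "sort xs ! i \<le> sort ys ! i"
proof -
  let ?v = "sort ys ! i"
  have "{j. j < length (sort ys) \<and> sort ys ! j \<le> ?v} \<supseteq> {0..i}"
  proof
    fix j assume "j \<in> {0..i}"
    then show "j \<in> {j. j < length (sort ys) \<and> sort ys ! j \<le> ?v}"
      using i len by (auto intro: sorted_nth_mono)
  qed
  then have "card {0..i} \<le> card {j. j < length (sort ys) \<and> sort ys ! j \<le> ?v}"
    by (rule card_mono[rotated]) simp
  then have "i + 1 \<le> card {j. j < length (sort ys) \<and> sort ys ! j \<le> ?v}" by simp
  also have "\<dots> = length (filter (\<lambda>y. y \<le> ?v) (sort ys))" by (simp add: length_filter_conv_card)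
  also have "\<dots> = length (filter (\<lambda>y. y \<le> ?v) ys)" by (rule mset_eq_length) (simp add: mset_filter)
  also have "\<dots> = card {j. j < length ys \<and> ys ! j \<le> ?v}" by (simp add: length_filter_conv_card)
  also have "\<dots> \<le> card {j. j < length xs \<and> xs ! j \<le> ?v}"
    by (rule card_mono) (use le len in \<open>auto intro: order_trans\<close>)
  also have "\<dots> = length (filter (\<lambda>y. y \<le> ?v) xs)" by (simp add: length_filter_conv_card)
  finally show ?thesis using sort_nth_le_if_count[OF i] by simp
qed

lemma vsort_mono:
  assumes "\<forall>i<c. x i \<le> y i" shows "\<forall>i<c. vsort c x i \<le> vsort c y i"
  unfolding vsort_def using sort_nth_mono[of "map x [0..<c]" "map y [0..<c]"] assms by auto

lemma vsort_nonneg: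
  assumes "\<forall>i<c. x i \<ge> 0" shows "\<forall>i<c. vsort c x i \<ge> 0"
proof (intro allI impI)
  fix i assume i: "i < c"
  have "sort (map x [0..<c]) ! i \<in> set (sort (map x [0..<c]))" by (rule nth_mem) (simp add: i)
  then show "vsort c x i \<ge> 0" using assms i unfolding vsort_def by auto
qed

lemma mset_map_update:
  assumes p: "p < c" and eq: "\<forall>j<c. j \<noteq> p \<longrightarrow> g j = f j"
  shows "mset (map g [0..<c]) = add_mset (g p) (mset (map f [0..<c]) - {#f p#})"
proof -
  have "map g [0..<c] = (map f [0..<c])[p := g p]"
    by (rule nth_equalityI) (use eq p in \<open>auto simp: nth_list_update\<close>)
  then show ?thesis using p by (simp add: mset_update)
qed

lemma hd_sorted_eq_min:
  fixes L :: "real list"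
  assumes "sorted L" "x \<in> set L" "\<forall>y\<in>set L. x \<le> y" shows "hd L = x"
proof -
  obtain z zs where L: "L = z # zs" using assms(2) by (cases L) auto
  have "z \<le> x" using assms(1,2) L by auto
  moreover have "x \<le> z" using assms(3) L by auto
  ultimately show ?thesis using L by simp
qed

lemma sorted_mset_eq: "sorted xs \<Longrightarrow> sorted ys \<Longrightarrow> mset xs = mset ys \<Longrightarrow> xs = (ys::real list)"
  by (metis properties_for_sort)

lemma hd_le_hd_insort_tl:
  fixes L :: "real list"
  assumes "sorted L" "L \<noteq> []" "hd L \<le> e" shows "hd L \<le> hd (insort e (tl L))"
proof -
  have "hd (insort e (tl L)) \<in> set (insort e (tl L))" by (rule hd_in_set) simp
  then have "hd (insort e (tl L)) = e \<or> hd (insort e (tl L)) \<in> set (tl L)" by (simp add: set_insort_key)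
  moreover have "\<forall>y\<in>set (tl L). hd L \<le> y" using assms(1,2) by (cases L) auto
  ultimately show ?thesis using assms(3) by auto
qed

lemma down_closed_eq_lessThan:
  assumes fin: "finite S" and dc: "\<And>i j. j \<in> S \<Longrightarrow> i \<le> j \<Longrightarrow> i \<in> (S::nat set)"
  shows "S = {..<card S}"
proof (cases "S = {}")
  case True then show ?thesis by simp
next
  case False
  define m where "m = Max S"
  have m: "m \<in> S" "\<forall>x\<in>S. x \<le> m" using fin False unfolding m_def by auto
  have "S = {..m}"
  proof
    show "S \<subseteq> {..m}" using m by auto
    show "{..m} \<subseteq> S" using dc m(1) by auto
  qed
  then show ?thesis by (simp add: lessThan_Suc_atMost)
qed

lemma filter_upt_prefix:
  assumes "s \<le> N" shows "filter (\<lambda>j. j < s \<and> Q j) [0..<N] = filter Q [0..<s]"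
proof -
  have "[0..<N] = [0..<s] @ [s..<N]" using assms by (metis le0 upt_add_eq_append add_diff_inverse_nat not_less diff_is_0_eq' nat_le_iff_add)
  moreover have "filter (\<lambda>j. j < s \<and> Q j) [s..<N] = []" by (auto simp: filter_empty_conv)
  moreover have "filter (\<lambda>j. j < s \<and> Q j) [0..<s] = filter Q [0..<s]" by (rule filter_cong) auto
  ultimately show ?thesis by simp
qed

lemma Collect_shift_image: fixes j0 :: nat assumes "\<forall>j<j0. \<not> P j" shows "{j. P j} = (\<lambda>i. j0 + i) ` {i. P (j0 + i)}"
proof
  show "{j. P j} \<subseteq> (\<lambda>i. j0 + i) ` {i. P (j0 + i)}"
  proof
    fix j assume "j \<in> {j. P j}"
    then have "P j" by simp
    moreover have "j0 \<le> j" using assms \<open>P j\<close> not_less by blast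
    ultimately have e: "j0 + (j - j0) = j" "P (j0 + (j - j0))" by simp_all
    show "j \<in> (\<lambda>i. j0 + i) ` {i. P (j0 + i)}" by (rule image_eqI[of _ _ "j - j0"]) (use e in simp_all)
  qed
next
  show "(\<lambda>i. j0 + i) ` {i. P (j0 + i)} \<subseteq> {j. P j}" by blast
qed

lemma card_Collect_shift: fixes j0 :: nat shows "(\<forall>j<j0. \<not> P j) \<Longrightarrow> card {j. P j} = card {i. P (j0 + i)}"
  by (subst Collect_shift_image[of j0 P]) (auto intro!: card_image simp: inj_on_def)

lemma card_Collect_prefix:
  fixes j0 :: nat
  assumes fin: "finite {j. P j}" and pre: "\<forall>j<j0. P j"
  shows "card {j. P j} = j0 + card {i. P (j0 + i)}"
proof -
  have "{j. P j} = {..<j0} \<union> (\<lambda>i. j0 + i) ` {i. P (j0 + i)}"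
  proof
    show "{j. P j} \<subseteq> {..<j0} \<union> (\<lambda>i. j0 + i) ` {i. P (j0 + i)}"
    proof
      fix j assume j: "j \<in> {j. P j}"
      show "j \<in> {..<j0} \<union> (\<lambda>i. j0 + i) ` {i. P (j0 + i)}"
      proof (cases "j < j0")
        case False
        then have e: "j0 + (j - j0) = j" "P (j0 + (j - j0))" using j by simp_all
        show ?thesis by (rule UnI2, rule image_eqI[of _ _ "j - j0"]) (use e in simp_all)
      qed simp
    qed
  qed (use pre in auto)
  moreover have "{..<j0} \<inter> (\<lambda>i. j0 + i) ` {i. P (j0 + i)} = {}" by auto
  moreover have "finite ((\<lambda>i. j0 + i) ` {i. P (j0 + i)})"
    by (rule finite_subset[OF _ fin]) auto
  moreover have "card ((\<lambda>i. j0 + i) ` {i. P (j0 + i)}) = card {i. P (j0 + i)}"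
    by (rule card_image) (simp add: inj_on_def)
  ultimately show ?thesis by (simp add: card_Un_disjoint)
qed

lemma filter_mset_greater_map_max:
  fixes al x :: real assumes "al \<le> x"
  shows "filter_mset (\<lambda>y. x < y) (mset (map (max al) L)) = filter_mset (\<lambda>y. x < y) (mset L)"
proof -
  have "filter (\<lambda>y. x < y) (map (max al) L) = filter (\<lambda>y. x < y) L"
    using assms by (induction L) (auto simp: max_def)
  then show ?thesis by (metis mset_filter)
qed

section \<open>The Kiefer--Wolfowitz recursion\<close>

lemma kw_step_mono:
  assumes "\<forall>i<c. w i \<le> w' i" shows "\<forall>i<c. kw_step c v A w i \<le> kw_step c v A w' i"
  unfolding kw_step_def by (rule vsort_mono) (use assms in \<open>auto simp: vpos_def\<close>)

lemma kw_step_nonneg: "\<forall>i<c. kw_step c v A w i \<ge> 0"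
  unfolding kw_step_def by (rule vsort_nonneg) (auto simp: vpos_def)

lemma Wseq_add: "Wseq c T0 T k w (i + j) = Wseq c T0 T (idx (ordi k + int i)) (Wseq c T0 T k w i) j"
  by (induction j) (auto simp: add.assoc)

lemma Wseq_mono: "\<forall>i<c. w i \<le> w' i \<Longrightarrow> \<forall>i<c. Wseq c T0 T k w j i \<le> Wseq c T0 T k w' j i"
  by (induction j) (auto intro: kw_step_mono[rule_format])

lemma Wseq_nonneg: "\<forall>i<c. w i \<ge> 0 \<Longrightarrow> \<forall>i<c. Wseq c T0 T k w j i \<ge> 0"
  by (cases j) (auto intro: kw_step_nonneg[rule_format])



definition vanishes_from :: "nat \<Rightarrow> (nat \<Rightarrow> real) \<Rightarrow> bool" where
  "vanishes_from c w \<longleftrightarrow> (\<forall>i\<ge>c. w i = 0)"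

lemma vanishes_from_kw_step: "vanishes_from c (kw_step c v A w)" by (simp add: vanishes_from_def kw_step_def vsort_def)

lemma vanishes_from_zerov: "vanishes_from c zerov" by (simp add: vanishes_from_def zerov_def)

lemma vanishes_from_Wseq: "vanishes_from c w \<Longrightarrow> vanishes_from c (Wseq c T0 T k w j)"
  by (cases j) (auto simp: vanishes_from_kw_step)

lemma vanishes_from_eqI: "vanishes_from c w \<Longrightarrow> vanishes_from c w' \<Longrightarrow> \<forall>i<c. w i = w' i \<Longrightarrow> w = w'"
  unfolding vanishes_from_def by (metis not_le ext)

definition workload_vec :: "nat \<Rightarrow> real \<Rightarrow> real list \<Rightarrow> nat \<Rightarrow> real" where
  "workload_vec c al F = vec_of_list c (sort (map (\<lambda>y. max (y - al) 0) F))"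

lemma workload_vec_sorted: "sorted F \<Longrightarrow> workload_vec c al F = vec_of_list c (map (\<lambda>y. max (y - al) 0) F)"
  unfolding workload_vec_def by (subst sort_map_sorted) (auto simp: mono_def)

lemma map_upt_hd_tl:
  assumes "length F = c" "c \<ge> 1"
  shows "map (\<lambda>i. f (F ! i) i) [0..<c] = f (hd F) 0 # map (\<lambda>k. f (tl F ! k) (Suc k)) [0..<length (tl F)]"
proof -
  obtain x xs where F: "F = x # xs" using assms by (cases F) auto
  have c: "c = Suc (length xs)" using assms F by simp
  have "[0..<c] = 0 # [Suc 0..<Suc (length xs)]" unfolding c by (rule upt_conv_Cons) simp
  also have "[Suc 0..<Suc (length xs)] = map Suc [0..<length xs]" by (rule map_Suc_upt[symmetric])
  finally have "[0..<c] = 0 # map Suc [0..<length xs]" .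
  then show ?thesis using F by (simp add: map_map o_def)
qed

lemma kw_step_workload_vec:
  assumes len: "length F = c" and c1: "c \<ge> 1" and so: "sorted F" and A: "A \<ge> 0"
  shows "kw_step c v A (workload_vec c al F) = workload_vec c (al + A) (insort (max al (hd F) + v) (tl F))"
proof -
  define g where "g = (\<lambda>y::real. max (y - al) 0)"
  define g' where "g' = (\<lambda>y::real. max (y - (al + A)) 0)"
  have w: "workload_vec c al F = vec_of_list c (map g F)" unfolding g_def by (rule workload_vec_sorted[OF so])
  have "map (\<lambda>i. max (vec_of_list c (map g F) i + v * e1 i - A * one c i) 0) [0..<c]
      = map (\<lambda>i. (\<lambda>y i. max (g y + (if i = 0 then v else 0) - A) 0) (F ! i) i) [0..<c]"
    using len by (auto simp: vec_of_list_def e1_def one_def)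
  also have "\<dots> = max (g (hd F) + v - A) 0 # map (\<lambda>k. max (g (tl F ! k) - A) 0) [0..<length (tl F)]"
    by (subst map_upt_hd_tl[OF len c1]) simp
  also have "\<dots> = g' (max al (hd F) + v) # map g' (tl F)"
  proof -
    have "map (\<lambda>k. max (g (tl F ! k) - A) 0) [0..<length (tl F)] = map (\<lambda>y. max (g y - A) 0) (tl F)"
      by (rule nth_equalityI) auto
    moreover have "(\<lambda>y. max (g y - A) 0) = g'" using A by (auto simp: g_def g'_def fun_eq_iff)
    moreover have "max (g (hd F) + v - A) 0 = g' (max al (hd F) + v)" by (auto simp: g_def g'_def)
    ultimately show ?thesis by simp
  qed
  finally have L: "map (\<lambda>i. max (vec_of_list c (map g F) i + v * e1 i - A * one c i) 0) [0..<c] = g' (max al (hd F) + v) # map g' (tl F)" .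
  have "kw_step c v A (workload_vec c al F) = vec_of_list c (sort (g' (max al (hd F) + v) # map g' (tl F)))"
    unfolding kw_step_def vsort_eq_vec_of_list w vpos_def L by simp
  also have "\<dots> = workload_vec c (al + A) (insort (max al (hd F) + v) (tl F))"
    unfolding workload_vec_def g'_def by (intro arg_cong[where f="vec_of_list c"] sort_eq_if_mset_eq) simp
  finally show ?thesis .
qed

lemma workload_vec_nonneg: "length F = c \<Longrightarrow> \<forall>i<c. workload_vec c al F i \<ge> 0"
proof (intro allI impI)
  fix i assume i: "i < c" and F: "length F = c"
  have "sort (map (\<lambda>y. max (y - al) 0) F) ! i \<in> set (sort (map (\<lambda>y. max (y - al) 0) F))"
    by (rule nth_mem) (simp add: i F)
  then show "workload_vec c al F i \<ge> 0" using i by (auto simp: workload_vec_def vec_of_list_def)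
qed

lemma workload_vec_0: "sorted F \<Longrightarrow> length F = c \<Longrightarrow> c \<ge> 1 \<Longrightarrow> workload_vec c al F 0 = max (hd F - al) 0"
  by (cases F) (auto simp: workload_vec_sorted vec_of_list_def)

lemma workload_vec_eq_map_max:
  assumes "sorted F1" "sorted F2" "length F1 = c" "length F2 = c" "workload_vec c al F1 = workload_vec c al F2"
  shows "map (max al) F1 = map (max al) F2"
proof (rule nth_equalityI)
  show "length (map (max al) F1) = length (map (max al) F2)" using assms by simp
  fix i assume i: "i < length (map (max al) F1)"
  then have ic: "i < c" using assms by simp
  have "workload_vec c al F1 i = workload_vec c al F2 i" using fun_cong[OF assms(5)] .
  then have "max (F1 ! i - al) 0 = max (F2 ! i - al) 0"
    using ic assms(1-4) by (simp add: workload_vec_sorted vec_of_list_def)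
  then have "max al (F1 ! i) = max al (F2 ! i)" by (auto simp: max_def split: if_splits)
  then show "map (max al) F1 ! i = map (max al) F2 ! i" using ic assms by simp
qed

lemma workload_vec_mset_cong: "mset F = mset G \<Longrightarrow> workload_vec c al F = workload_vec c al G"
  unfolding workload_vec_def by (metis mset_map sort_eq_if_mset_eq)

lemma Wlim_eqI:
  assumes "\<And>k'. k' \<le> k \<Longrightarrow> Wk c T0 T k' m zerov = w"
  shows "Wlim c T0 T m = w"
proof -
  have "eventually (\<lambda>k'. Wk c T0 T k' m zerov = w) at_bot"
    unfolding eventually_at_bot_linorder using assms by blast
  then have "((\<lambda>k'. Wk c T0 T k' m zerov) \<longlongrightarrow> w) at_bot" by (rule tendsto_eventually)
  then show ?thesis unfolding Wlim_def by (intro tendsto_Lim) auto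
qed

lemma Zlim_eqI:
  assumes "\<And>u. u \<le> s \<Longrightarrow> Zu c T0 T u (t - u) (0, zerov, u - Sup {T0 n | n. n \<noteq> 0 \<and> T0 n \<le> u}) = z"
  shows "Zlim c T0 T t = z"
proof -
  have "eventually (\<lambda>u. Zu c T0 T u (t - u) (0, zerov, u - Sup {T0 n | n. n \<noteq> 0 \<and> T0 n \<le> u}) = z) at_bot"
    unfolding eventually_at_bot_linorder using assms by blast
  then have "((\<lambda>u. Zu c T0 T u (t - u) (0, zerov, u - Sup {T0 n | n. n \<noteq> 0 \<and> T0 n \<le> u})) \<longlongrightarrow> z) at_bot"
    by (rule tendsto_eventually)
  then show ?thesis unfolding Zlim_def by (intro tendsto_Lim) auto
qed

locale queue_paths =
  fixes c :: nat and T0 :: "int \<Rightarrow> real" and T :: "nat \<Rightarrow> int \<Rightarrow> real"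
  assumes c_pos: "c \<ge> 1"
    and arrivals: "point_seq T0"
    and servers: "\<forall>i\<in>{1..c}. point_seq (T i)"
    and no_ties_arr: "\<forall>i\<in>{1..c}. \<forall>m p. m \<noteq> 0 \<longrightarrow> p \<noteq> 0 \<longrightarrow> T0 m \<noteq> T i p"
    and no_ties_srv: "\<forall>i\<in>{1..c}. \<forall>j\<in>{1..c}. i \<noteq> j \<longrightarrow>
                        (\<forall>m p. m \<noteq> 0 \<longrightarrow> p \<noteq> 0 \<longrightarrow> T i m \<noteq> T j p)"
    and stable: "\<forall>t. bdd_above (qv_set c T0 T t)"

begin

definition a :: "int \<Rightarrow> real" where "a = reindex T0"

definition b :: "nat \<Rightarrow> int \<Rightarrow> real" where "b i = reindex (T i)"

lemma unbounded_a: "unbounded_strict_mono a" unfolding a_def using arrivals by (rule point_seq_reindex)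

lemma unbounded_b: "i \<in> {1..c} \<Longrightarrow> unbounded_strict_mono (b i)" unfolding b_def using servers by (auto intro: point_seq_reindex)

lemma a_less_iff[simp]: "a i < a j \<longleftrightarrow> i < j" using unbounded_less_iff[OF unbounded_a] .

lemma a_le_iff[simp]: "a i \<le> a j \<longleftrightarrow> i \<le> j" using unbounded_le_iff[OF unbounded_a] .

lemma a_eq_iff[simp]: "a i = a j \<longleftrightarrow> i = j" by (metis a_le_iff order_antisym order_refl)

lemma b_less_iff[simp]: "i \<in> {1..c} \<Longrightarrow> b i m < b i p \<longleftrightarrow> m < p" using unbounded_less_iff[OF unbounded_b] .

lemma b_le_iff[simp]: "i \<in> {1..c} \<Longrightarrow> b i m \<le> b i p \<longleftrightarrow> m \<le> p" using unbounded_le_iff[OF unbounded_b] .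

lemma b_eq_iff[simp]: "i \<in> {1..c} \<Longrightarrow> b i m = b i p \<longleftrightarrow> m = p" by (metis b_le_iff order_antisym order_refl)

lemma a_neq_b: "i \<in> {1..c} \<Longrightarrow> a m \<noteq> b i p"
  using no_ties_arr unfolding a_def b_def reindex_def by auto

lemma b_neq_b: "i \<in> {1..c} \<Longrightarrow> i' \<in> {1..c} \<Longrightarrow> i \<noteq> i' \<Longrightarrow> b i m \<noteq> b i' p"
  using no_ties_srv unfolding b_def reindex_def by auto

definition last_epoch :: "nat \<Rightarrow> real \<Rightarrow> int" where "last_epoch i t = floor_index (b i) t"

definition epochs :: "real \<Rightarrow> int" where "epochs t = (\<Sum>i\<in>{1..c}. last_epoch i t)"

definition next_epoch :: "nat \<Rightarrow> real \<Rightarrow> real" where "next_epoch i t = b i (last_epoch i t + 1)"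

definition is_epoch :: "real \<Rightarrow> bool" where "is_epoch p \<longleftrightarrow> (\<exists>i\<in>{1..c}. \<exists>j. b i j = p)"

lemma le_last_epoch_iff: "i \<in> {1..c} \<Longrightarrow> j \<le> last_epoch i t \<longleftrightarrow> b i j \<le> t"
  unfolding last_epoch_def using le_floor_index_iff[OF unbounded_b] .

lemma last_epoch_less_iff: "i \<in> {1..c} \<Longrightarrow> last_epoch i t < j \<longleftrightarrow> t < b i j"
  unfolding last_epoch_def using floor_index_less_iff[OF unbounded_b] .

lemma last_epoch_mono: "i \<in> {1..c} \<Longrightarrow> s \<le> t \<Longrightarrow> last_epoch i s \<le> last_epoch i t"
  unfolding last_epoch_def using floor_index_mono[OF unbounded_b] .

lemma last_epoch_at[simp]: "i \<in> {1..c} \<Longrightarrow> last_epoch i (b i j) = j"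
  unfolding last_epoch_def using floor_index_at[OF unbounded_b] .

lemma last_epoch_unique: "i \<in> {1..c} \<Longrightarrow> b i j \<le> t \<Longrightarrow> t < b i (j+1) \<Longrightarrow> last_epoch i t = j"
  unfolding last_epoch_def using floor_index_unique[OF unbounded_b] .

lemma next_epoch_gt: "i \<in> {1..c} \<Longrightarrow> t < next_epoch i t"
  unfolding next_epoch_def using last_epoch_less_iff[of i t "last_epoch i t + 1"] by simp

lemma b_last_epoch_le: "i \<in> {1..c} \<Longrightarrow> b i (last_epoch i t) \<le> t"
  using le_last_epoch_iff by auto

lemma next_epoch_least: "i \<in> {1..c} \<Longrightarrow> t < b i j \<Longrightarrow> next_epoch i t \<le> b i j"
  unfolding next_epoch_def using last_epoch_less_iff[of i t j] by simp

lemma epochs_mono: "s \<le> t \<Longrightarrow> epochs s \<le> epochs t"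
  unfolding epochs_def by (rule sum_mono) (use last_epoch_mono in auto)

lemma epochs_strict: assumes "s < p" "is_epoch p" shows "epochs s < epochs p"
proof -
  from assms(2) obtain i j where i: "i \<in> {1..c}" and p: "b i j = p" by (auto simp: is_epoch_def)
  have "last_epoch i s < last_epoch i p" using last_epoch_less_iff[OF i] assms(1) p i by auto
  then show ?thesis unfolding epochs_def
    by (intro sum_strict_mono_ex1) (use i last_epoch_mono assms(1) in auto)
qed

lemma is_epoch_le: "is_epoch p \<Longrightarrow> epochs p \<le> epochs t \<Longrightarrow> p \<le> t"
  using epochs_strict by (meson not_le)

definition next_any_epoch :: "real \<Rightarrow> real" where "next_any_epoch t = Min ((\<lambda>i. next_epoch i t) ` {1..c})"

lemma next_any_epoch_props:
  shows "t < next_any_epoch t" "is_epoch (next_any_epoch t)" "epochs (next_any_epoch t) = epochs t + 1" "\<And>s. t \<le> s \<Longrightarrow> s < next_any_epoch t \<Longrightarrow> epochs s = epochs t"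
proof -
  have ne: "{1..c} \<noteq> {}" using c_pos by auto
  have fin: "finite ((\<lambda>i. next_epoch i t) ` {1..c})" by simp
  have "next_any_epoch t \<in> (\<lambda>i. next_epoch i t) ` {1..c}" unfolding next_any_epoch_def using ne fin by (intro Min_in) auto
  then obtain i0 where i0: "i0 \<in> {1..c}" "next_any_epoch t = next_epoch i0 t" by auto
  have le: "next_any_epoch t \<le> next_epoch i t" if "i \<in> {1..c}" for i unfolding next_any_epoch_def using that fin by auto
  show tl: "t < next_any_epoch t" using i0 next_epoch_gt by auto
  show "is_epoch (next_any_epoch t)" using i0 by (auto simp: is_epoch_def next_epoch_def)
  have other: "next_any_epoch t < next_epoch i t" if "i \<in> {1..c}" "i \<noteq> i0" for i
  proof -
    have "next_epoch i t \<noteq> next_epoch i0 t" unfolding next_epoch_def using b_neq_b that i0 by metis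
    then show ?thesis using le[OF that(1)] i0 by auto
  qed
  have ixo: "last_epoch i (next_any_epoch t) = last_epoch i t" if "i \<in> {1..c}" "i \<noteq> i0" for i
    by (rule last_epoch_unique) (use that other b_last_epoch_le[of i t] tl in \<open>auto simp: next_epoch_def\<close>)
  have ix0: "last_epoch i0 (next_any_epoch t) = last_epoch i0 t + 1" using i0 by (simp add: next_epoch_def)
  have "epochs (next_any_epoch t) = last_epoch i0 (next_any_epoch t) + (\<Sum>i\<in>{1..c} - {i0}. last_epoch i (next_any_epoch t))"
    unfolding epochs_def using i0 by (simp add: sum.remove)
  also have "\<dots> = last_epoch i0 t + 1 + (\<Sum>i\<in>{1..c} - {i0}. last_epoch i t)"
    using ix0 ixo by simp
  also have "\<dots> = epochs t + 1" unfolding epochs_def using i0 by (simp add: sum.remove)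
  finally show "epochs (next_any_epoch t) = epochs t + 1" .
  fix s assume s: "t \<le> s" "s < next_any_epoch t"
  have "last_epoch i s = last_epoch i t" if "i \<in> {1..c}" for i
    by (rule last_epoch_unique) (use that le[OF that] s b_last_epoch_le[of i t] in \<open>auto simp: next_epoch_def\<close>)
  then show "epochs s = epochs t" unfolding epochs_def by simp
qed

lemma epochs_below: "\<exists>t. epochs t < l"
proof -
  define m where "m = - \<bar>l\<bar> - 1"
  define t where "t = Min ((\<lambda>i. b i m) ` {1..c}) - 1"
  have "last_epoch i t \<le> m - 1" if "i \<in> {1..c}" for i
  proof -
    have "Min ((\<lambda>i. b i m) ` {1..c}) \<le> b i m" by (rule Min_le) (use that in auto)
    then have "t < b i m" unfolding t_def by linarith
    then show ?thesis using last_epoch_less_iff[OF that] by auto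
  qed
  then have "epochs t \<le> (\<Sum>i\<in>{1..c}. m - 1)" unfolding epochs_def by (rule sum_mono)
  also have "\<dots> = int c * (m - 1)" by simp
  also have "\<dots> \<le> 1 * (m - 1)" using c_pos unfolding m_def by (intro mult_right_mono_neg) auto
  also have "\<dots> = m - 1" by simp
  also have "\<dots> < l" unfolding m_def by simp
  finally show ?thesis by blast
qed

lemma epochs_funpow_next_any: "epochs ((next_any_epoch ^^ d) t) = epochs t + int d \<and> (d \<ge> 1 \<longrightarrow> is_epoch ((next_any_epoch ^^ d) t))"
  by (induction d) (auto simp: next_any_epoch_props)

lemma epoch_with_ex: "\<exists>p. is_epoch p \<and> epochs p = l"
proof -
  obtain t where t: "epochs t < l" using epochs_below by blast
  define d where "d = nat (l - epochs t)"
  have "d \<ge> 1" using t unfolding d_def by simp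
  moreover have "epochs t + int d = l" using t unfolding d_def by simp
  ultimately show ?thesis using epochs_funpow_next_any[of d t] by (intro exI[of _ "(next_any_epoch ^^ d) t"]) auto
qed

lemma is_epoch_epochs_inj: "is_epoch p \<Longrightarrow> is_epoch p' \<Longrightarrow> epochs p = epochs p' \<Longrightarrow> p = p'"
  using epochs_strict by (metis less_irrefl linorder_neqE_linordered_idom)

definition epoch_with :: "int \<Rightarrow> real" where "epoch_with l = (THE p. is_epoch p \<and> epochs p = l)"

lemma epoch_with_spec: "is_epoch (epoch_with l) \<and> epochs (epoch_with l) = l"
  unfolding epoch_with_def by (rule theI') (use epoch_with_ex is_epoch_epochs_inj in blast)

lemma epoch_with_eq: "is_epoch p \<Longrightarrow> epochs p = l \<Longrightarrow> epoch_with l = p"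
  using epoch_with_spec is_epoch_epochs_inj by blast

lemma epoch_with_less_iff[simp]: "epoch_with l < epoch_with l' \<longleftrightarrow> l < l'"
  by (metis epochs_strict linorder_neqE_linordered_idom order_less_asym epoch_with_spec)

lemma epoch_with_epochs_le: "epoch_with (epochs t) \<le> t"
  using is_epoch_le epoch_with_spec by simp

lemma next_any_epoch_eq: "next_any_epoch t = epoch_with (epochs t + 1)"
  using next_any_epoch_props epoch_with_eq by metis

section \<open>Queue length and departure epochs\<close>

definition net_input :: "real \<Rightarrow> int" where "net_input t = floor_index a t - epochs t"

definition queue_set :: "real \<Rightarrow> int set" where "queue_set t = {net_input t - net_input s | s. s \<le> t}"

lemma qv_set_eq_queue_set: "qv_set c T0 T t = queue_set t"
proof -
  have "int (cnt T0 s t) - (\<Sum>i\<in>{1..c}. int (cnt (T i) s t)) = net_input t - net_input s" if "s \<le> t" for s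
  proof -
    have "int (cnt T0 s t) = floor_index a t - floor_index a s" unfolding a_def by (rule int_cnt_eq_floor_index[OF arrivals that])
    moreover have "(\<Sum>i\<in>{1..c}. int (cnt (T i) s t)) = (\<Sum>i\<in>{1..c}. last_epoch i t - last_epoch i s)"
      by (rule sum.cong) (use servers that in \<open>auto simp: last_epoch_def b_def intro!: int_cnt_eq_floor_index\<close>)
    ultimately show ?thesis by (simp add: net_input_def epochs_def sum_subtractf)
  qed
  then show ?thesis unfolding qv_set_def queue_set_def by force
qed

lemma queue_set_bdd: "bdd_above (queue_set t)" using stable qv_set_eq_queue_set by metis

lemma queue_set_nonempty: "queue_set t \<noteq> {}" unfolding queue_set_def by auto

lemma floor_index_a_at[simp]: "floor_index a (a m) = m" using floor_index_at[OF unbounded_a] .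

lemma queue_set_le_step:
  assumes "x \<in> queue_set (a (m+1))"
  shows "x \<le> max (Sup (queue_set (a m)) + net_input (a (m+1)) - net_input (a m)) 1"
proof -
  from assms obtain s where s: "s \<le> a (m+1)" "x = net_input (a (m+1)) - net_input s"
    by (auto simp: queue_set_def)
  show ?thesis
  proof (cases "s \<le> a m")
    case True
    have "net_input (a m) - net_input s \<le> Sup (queue_set (a m))"
      by (rule cSup_upper[OF _ queue_set_bdd]) (use True in \<open>auto simp: queue_set_def\<close>)
    then show ?thesis using s by simp
  next
    case False
    have "m \<le> floor_index a s" using le_floor_index_iff[OF unbounded_a, of m s] False by simp
    moreover have "epochs s \<le> epochs (a (m+1))" using epochs_mono s(1) .
    ultimately show ?thesis using s by (simp add: net_input_def)
  qed
qed

lemma queue_set_step_mem: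
  "Sup (queue_set (a m)) + net_input (a (m+1)) - net_input (a m) \<in> queue_set (a (m+1))"
proof -
  have "Sup (queue_set (a m)) \<in> queue_set (a m)"
    by (rule int_Sup_mem[OF queue_set_nonempty queue_set_bdd])
  then obtain s where s: "s \<le> a m" "Sup (queue_set (a m)) = net_input (a m) - net_input s"
    unfolding queue_set_def by blast
  have "a m \<le> a (m+1)" by simp
  then have "s \<le> a (m+1)" using s(1) by linarith
  then show ?thesis unfolding queue_set_def[of "a (m+1)"] using s(2)
    by (intro CollectI exI[of _ s] conjI) linarith+
qed

text \<open>Just before an arrival there is a moment after the last service epoch, so the arriving
  customer alone already makes the queue nonempty.\<close>

lemma one_mem_queue_set: "1 \<in> queue_set (a (m+1))"
proof -
  let ?t = "a (m+1)"
  define s where "s = max ((a m + ?t) / 2) (epoch_with (epochs ?t))"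
  have "epoch_with (epochs ?t) \<noteq> ?t" using epoch_with_spec a_neq_b unfolding is_epoch_def by metis
  then have "epoch_with (epochs ?t) < ?t" using epoch_with_epochs_le by (simp add: order_less_le)
  moreover have "a m < (a m + ?t)/2" "(a m + ?t)/2 < ?t" by (simp_all add: field_simps)
  ultimately have s: "a m < s" "s < ?t" unfolding s_def less_max_iff_disj max_less_iff_conj by auto
  have "floor_index a s = m" by (rule floor_index_unique[OF unbounded_a]) (use s in auto)
  moreover have "epochs s = epochs ?t"
  proof -
    have "epochs (epoch_with (epochs ?t)) \<le> epochs s" unfolding s_def by (rule epochs_mono) simp
    moreover have "epochs s \<le> epochs ?t" using epochs_mono s by simp
    ultimately show ?thesis using epoch_with_spec by simp
  qed
  ultimately have "net_input ?t - net_input s = 1" by (simp add: net_input_def)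
  then show ?thesis unfolding queue_set_def using s by (intro CollectI exI[of _ s] conjI) linarith+
qed

lemma queue_Sup_step:
  "Sup (queue_set (a (m+1))) = max (Sup (queue_set (a m)) + net_input (a (m+1)) - net_input (a m)) 1"
  by (rule cSup_eq_maximum)
    (use queue_set_step_mem one_mem_queue_set queue_set_le_step in \<open>simp_all add: max_def\<close>)

text \<open>Under FCFS, customer m leaves the queue at the Qv(a m)-th service epoch after his arrival.\<close>

definition dep_level :: "int \<Rightarrow> int" where "dep_level m = epochs (a m) + Sup (queue_set (a m))"

lemma queue_Sup_pos: "Sup (queue_set (a m)) \<ge> 1"
  using queue_Sup_step[of "m - 1"] by simp

lemma Qv_arrival: "int (Qv c T0 T (a m)) = Sup (queue_set (a m))"
  unfolding Qv_def qv_set_eq_queue_set using queue_Sup_pos[of m] by simp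

lemma Qv_arrival_dep_level: "int (Qv c T0 T (a m)) = dep_level m - epochs (a m)"
  using Qv_arrival by (simp add: dep_level_def)

lemma dep_level_step: "dep_level (m+1) = max (dep_level m) (epochs (a (m+1))) + 1"
  unfolding dep_level_def queue_Sup_step by (simp add: net_input_def max_def)

lemma epochs_less_dep_level: "epochs (a m) < dep_level m"
  using queue_Sup_pos[of m] by (simp add: dep_level_def)

lemma dep_level_less_Suc: "dep_level m < dep_level (m+1)" using dep_level_step by simp

lemma dep_level_strict: "m < m' \<Longrightarrow> dep_level m < dep_level m'"
proof (induction "nat (m' - m)" arbitrary: m')
  case 0 then show ?case by simp
next
  case (Suc d)
  show ?case
  proof (cases "m' - 1 = m")
    case True then have "m' = m + 1" by simp
    then show ?thesis using dep_level_less_Suc[of m] by simp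
  next
    case False
    then have "dep_level m < dep_level (m' - 1)" using Suc by auto
    then show ?thesis using dep_level_less_Suc[of "m' - 1"] by simp
  qed
qed

definition departure :: "int \<Rightarrow> real" where "departure m = epoch_with (dep_level m)"

lemma a_less_departure: "a m < departure m"
  unfolding departure_def using epochs_less_dep_level epoch_with_spec by (metis epochs_mono not_le)

lemma departure_strict: "m < m' \<Longrightarrow> departure m < departure m'"
  unfolding departure_def using dep_level_strict by simp

lemma exists_epoch_iff: "(\<exists>i\<in>{1..c}. \<exists>m. m \<noteq> 0 \<and> T i m = x) \<longleftrightarrow> is_epoch x"
proof
  assume "\<exists>i\<in>{1..c}. \<exists>m. m \<noteq> 0 \<and> T i m = x"
  then obtain i m where "i \<in> {1..c}" "m \<noteq> 0" "T i m = x" by blast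
  then show "is_epoch x" unfolding is_epoch_def b_def reindex_def by (intro bexI[of _ i] exI[of _ "ordi m"]) auto
next
  assume "is_epoch x"
  then obtain i j where "i \<in> {1..c}" "b i j = x" unfolding is_epoch_def by blast
  then show "\<exists>i\<in>{1..c}. \<exists>m. m \<noteq> 0 \<and> T i m = x" unfolding b_def reindex_def
    by (intro bexI[of _ i] exI[of _ "idx j"]) auto
qed

lemma dep_eq_departure: "dep c T0 T (idx m) = departure m"
proof -
  have T0a: "T0 (idx m) = a m" by (simp add: a_def reindex_def)
  have key: "(\<Sum>i\<in>{1..c}. cnt (T i) (a m) x) = Qv c T0 T (a m) \<longleftrightarrow> epochs x = dep_level m" if "a m \<le> x" for x
  proof -
    have "int (\<Sum>i\<in>{1..c}. cnt (T i) (a m) x) = (\<Sum>i\<in>{1..c}. last_epoch i x - last_epoch i (a m))"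
      by (simp only: of_nat_sum, rule sum.cong) (use servers that in \<open>auto simp: last_epoch_def b_def intro!: int_cnt_eq_floor_index\<close>)
    also have "\<dots> = epochs x - epochs (a m)" by (simp add: epochs_def sum_subtractf)
    finally have "int (\<Sum>i\<in>{1..c}. cnt (T i) (a m) x) = epochs x - epochs (a m)" .
    have "(\<Sum>i\<in>{1..c}. cnt (T i) (a m) x) = Qv c T0 T (a m) \<longleftrightarrow>
          int (\<Sum>i\<in>{1..c}. cnt (T i) (a m) x) = int (Qv c T0 T (a m))" by (simp only: of_nat_eq_iff)
    also have "\<dots> \<longleftrightarrow> epochs x = dep_level m" using Qv_arrival_dep_level[of m] \<open>int (\<Sum>i\<in>{1..c}. cnt (T i) (a m) x) = epochs x - epochs (a m)\<close> by simp
    finally show ?thesis .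
  qed
  show ?thesis unfolding dep_def T0a exists_epoch_iff
  proof (rule the_equality)
    show "is_epoch (departure m) \<and> a m < departure m \<and> (\<Sum>i\<in>{1..c}. cnt (T i) (a m) (departure m)) = Qv c T0 T (a m)"
      using a_less_departure[of m] key[of "departure m"] epoch_with_spec[of "dep_level m"] unfolding departure_def by auto
  next
    fix x assume "is_epoch x \<and> a m < x \<and> (\<Sum>i\<in>{1..c}. cnt (T i) (a m) x) = Qv c T0 T (a m)"
    then show "x = departure m" using key[of x] epoch_with_eq unfolding departure_def by auto
  qed
qed

lemma dep_level_back:
  assumes d: "int d \<le> dep_level K - epochs (a K) - 1"
  shows "dep_level (K - int d) = dep_level K - int d"
  using d
proof (induction d)
  case 0 then show ?case by simp
next
  case (Suc d)
  then have IH: "dep_level (K - int d) = dep_level K - int d" by simp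
  have "dep_level (K - int d) = max (dep_level (K - int d - 1)) (epochs (a (K - int d))) + 1"
    using dep_level_step[of "K - int d - 1"] by simp
  moreover have "epochs (a (K - int d)) \<le> epochs (a K)" by (rule epochs_mono) simp
  moreover have "dep_level K - int d - 1 > epochs (a K)" using Suc.prems by simp
  ultimately have "dep_level (K - int d - 1) = dep_level K - int d - 1" using IH by (simp add: max_def split: if_splits)
  then show ?case by (simp add: algebra_simps)
qed

section \<open>The vacation workload dominates the Kiefer--Wolfowitz recursion\<close>

definition next_epoch_from :: "nat \<Rightarrow> real \<Rightarrow> real" where
  "next_epoch_from i s = (if \<exists>j. b i j = s then s else next_epoch i s)"

definition server_of :: "real \<Rightarrow> nat" where
  "server_of p = (THE i. i \<in> {1..c} \<and> (\<exists>j. b i j = p))"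

lemma server_of_spec: assumes "is_epoch p" shows "server_of p \<in> {1..c} \<and> (\<exists>j. b (server_of p) j = p)"
proof -
  from assms obtain i j where ij: "i \<in> {1..c}" "b i j = p" by (auto simp: is_epoch_def)
  have "server_of p = i" unfolding server_of_def
  proof (rule the_equality)
    show "i \<in> {1..c} \<and> (\<exists>j. b i j = p)" using ij by auto
  next
    fix i' assume "i' \<in> {1..c} \<and> (\<exists>j. b i' j = p)"
    then show "i' = i" using ij b_neq_b by metis
  qed
  then show ?thesis using ij by auto
qed

lemma server_of_unique: "i \<in> {1..c} \<Longrightarrow> b i j = p \<Longrightarrow> server_of p = i"
  using server_of_spec[of p] b_neq_b unfolding is_epoch_def by metis

lemma U_eq: assumes i: "i \<in> {1..c}" shows "U T i t = next_epoch i t - t"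
proof -
  have "Inf {T i m | m. m \<noteq> 0 \<and> T i m > t} = next_epoch i t"
  proof (rule cInf_eq_minimum)
    show "next_epoch i t \<in> {T i m | m. m \<noteq> 0 \<and> T i m > t}"
      using next_epoch_gt[OF i, of t] unfolding next_epoch_def b_def reindex_def by auto
  next
    fix x assume "x \<in> {T i m | m. m \<noteq> 0 \<and> T i m > t}"
    then obtain m where m: "m \<noteq> 0" "T i m = x" "x > t" by auto
    then have "b i (ordi m) = x" by (simp add: b_def reindex_def)
    then show "next_epoch i t \<le> x" using next_epoch_least[OF i] m by metis
  qed
  then show ?thesis by (simp add: U_def)
qed

lemma Uleft_eq: assumes i: "i \<in> {1..c}" shows "Uleft T i s = next_epoch_from i s - s"
proof -
  define p where "p = (if b i (last_epoch i s) = s then b i (last_epoch i s - 1) else b i (last_epoch i s))"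
  have epoch_with: "p < s"
  proof (cases "b i (last_epoch i s) = s")
    case True
    have "b i (last_epoch i s - 1) < b i (last_epoch i s)" using i by simp
    then show ?thesis using True unfolding p_def by simp
  next
    case False then show ?thesis unfolding p_def using b_last_epoch_le[OF i, of s] by simp
  qed
  have eq: "U T i x = next_epoch_from i s - x" if x: "p < x" "x < s" for x
  proof -
    have "next_epoch i x = next_epoch_from i s"
    proof (cases "b i (last_epoch i s) = s")
      case True
      have "last_epoch i x = last_epoch i s - 1"
        by (rule last_epoch_unique[OF i]) (use x True in \<open>auto simp: p_def\<close>)
      then show ?thesis using True by (auto simp: next_epoch_def next_epoch_from_def)
    next
      case False
      have nopt: "\<not> (\<exists>j. b i j = s)"
      proof
        assume "\<exists>j. b i j = s" then obtain j where "b i j = s" by blast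
        then show False using False i by (metis last_epoch_at)
      qed
      have "last_epoch i x = last_epoch i s"
        by (rule last_epoch_unique[OF i]) (use x False next_epoch_gt[OF i, of s] in \<open>auto simp: p_def next_epoch_def\<close>)
      then show ?thesis using nopt by (simp add: next_epoch_def next_epoch_from_def)
    qed
    then show ?thesis using U_eq[OF i] by simp
  qed
  have ev: "eventually (\<lambda>x. U T i x = next_epoch_from i s - x) (at_left s)"
    using eventually_at_left_real[OF epoch_with] by eventually_elim (use eq in auto)
  have "((\<lambda>x. next_epoch_from i s - x) \<longlongrightarrow> next_epoch_from i s - s) (at_left s)"
    by (intro tendsto_intros)
  moreover have ev2: "eventually (\<lambda>x. next_epoch_from i s - x = U T i x) (at_left s)" using ev by (simp add: eq_commute)
  ultimately have "((\<lambda>x. U T i x) \<longlongrightarrow> next_epoch_from i s - s) (at_left s)"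
    by (rule Lim_transform_eventually)
  then show ?thesis unfolding Uleft_def by (intro tendsto_Lim) auto
qed

lemma Vs_idx_eq: "Vs c T0 T (idx m) = next_epoch (server_of (departure m)) (departure m) - departure m"
proof -
  have sp: "is_epoch (departure m)" unfolding departure_def using epoch_with_spec by simp
  obtain j where j: "b (server_of (departure m)) j = departure m" and i: "server_of (departure m) \<in> {1..c}" using server_of_spec[OF sp] by blast
  define i0 where "i0 = server_of (departure m)"
  have "srv c T0 T (idx m) = (i0, idx j)" unfolding srv_def dep_eq_departure
  proof (rule the_equality)
    show "case (i0, idx j) of (i, ma) \<Rightarrow> i \<in> {1..c} \<and> ma \<noteq> 0 \<and> T i ma = departure m"
      using i j unfolding i0_def b_def reindex_def by auto
  next
    fix x assume "case x of (i, ma) \<Rightarrow> i \<in> {1..c} \<and> ma \<noteq> 0 \<and> T i ma = departure m"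
    then obtain i' m' where x: "x = (i', m')" "i' \<in> {1..c}" "m' \<noteq> 0" "T i' m' = departure m" by (cases x) auto
    then have "b i' (ordi m') = departure m" by (simp add: b_def reindex_def)
    then have "i' = i0" using server_of_unique[OF x(2)] unfolding i0_def by metis
    then have "b i0 (ordi m') = b i0 j" using j \<open>b i' (ordi m') = departure m\<close> unfolding i0_def by simp
    then have "ordi m' = j" using i unfolding i0_def by simp
    then show "x = (i0, idx j)" using x \<open>i' = i0\<close> by auto
  qed
  then have "Vs c T0 T (idx m) = b i0 (j+1) - b i0 j" by (simp add: Vs_def b_def reindex_def)
  moreover have "next_epoch i0 (departure m) = b i0 (j+1)" using j i unfolding i0_def by (metis last_epoch_at next_epoch_def)
  ultimately show ?thesis using j unfolding i0_def by simp
qed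

lemma Wv_idx_eq: "Wv c T0 T (idx m) = vec_of_list c (sort (map (\<lambda>j. next_epoch_from (j+1) (departure m) - a m) [0..<c]))"
proof -
  have D: "D c T0 T (idx m) = departure m - a m" by (simp add: D_def dep_eq_departure a_def reindex_def)
  have ul: "map (Uvec_left c T (departure m)) [0..<c] = map (\<lambda>j. next_epoch_from (j+1) (departure m) - departure m) [0..<c]"
    by (auto simp: Uvec_left_def Uleft_eq)
  have fe: "(\<lambda>j. next_epoch_from (j+1) (departure m) - a m) = (\<lambda>y. (departure m - a m) + y) \<circ> (\<lambda>j. next_epoch_from (j+1) (departure m) - departure m)"
    by (auto simp: fun_eq_iff)
  have "map (\<lambda>j. next_epoch_from (j+1) (departure m) - a m) [0..<c] = map (\<lambda>y. (departure m - a m) + y) (map (\<lambda>j. next_epoch_from (j+1) (departure m) - departure m) [0..<c])"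
    by (simp only: fe map_map)
  moreover have "sort (map (\<lambda>y. (departure m - a m) + y) (map (\<lambda>j. next_epoch_from (j+1) (departure m) - departure m) [0..<c])) = map (\<lambda>y. (departure m - a m) + y) (sort (map (\<lambda>j. next_epoch_from (j+1) (departure m) - departure m) [0..<c]))"
    by (rule sort_map_mono) (simp add: mono_def)
  ultimately have "sort (map (\<lambda>j. next_epoch_from (j+1) (departure m) - a m) [0..<c]) = map (\<lambda>y. (departure m - a m) + y) (sort (map (\<lambda>j. next_epoch_from (j+1) (departure m) - departure m) [0..<c]))"
    by (simp only:)
  then show ?thesis
    unfolding Wv_def vsort_def D dep_eq_departure ul by (auto simp: vec_of_list_def one_def)
qed

lemma next_epoch_from_ge: "i \<in> {1..c} \<Longrightarrow> s \<le> next_epoch_from i s"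
  unfolding next_epoch_from_def using next_epoch_gt[of i s] by auto

lemma next_epoch_le_next_epoch_from: assumes i: "i \<in> {1..c}" and ts: "t < s" shows "next_epoch i t \<le> next_epoch_from i s"
proof (cases "\<exists>j. b i j = s")
  case True
  then obtain j where "b i j = s" by blast
  then show ?thesis using next_epoch_least[OF i, of t j] ts by (auto simp: next_epoch_from_def)
next
  case False
  have "t < next_epoch i s" using ts next_epoch_gt[OF i, of s] by simp
  then have "next_epoch i t \<le> next_epoch i s" using next_epoch_least[OF i, of t "last_epoch i s + 1"] by (simp add: next_epoch_def)
  then show ?thesis using False by (simp add: next_epoch_from_def)
qed

definition free_after :: "int \<Rightarrow> real list" where
  "free_after m = sort (map (\<lambda>j. next_epoch_from (j+1) (departure m)) [0..<c])"

lemma is_epoch_departure: "is_epoch (departure m)" unfolding departure_def using epoch_with_spec by simp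

lemma server_of_departure: "server_of (departure m) \<in> {1..c}" using server_of_spec[OF is_epoch_departure] by blast

lemma next_epoch_from_other_server: assumes "is_epoch p" "i \<in> {1..c}" "i \<noteq> server_of p" shows "next_epoch_from i p = next_epoch i p"
proof -
  have "\<not> (\<exists>j. b i j = p)"
  proof
    assume "\<exists>j. b i j = p" then obtain j where "b i j = p" by blast
    then show False using server_of_unique[OF assms(2)] assms(3) by metis
  qed
  then show ?thesis by (simp add: next_epoch_from_def)
qed

lemma next_epoch_from_own_server: assumes "is_epoch p" shows "next_epoch_from (server_of p) p = p"
  using server_of_spec[OF assms] by (auto simp: next_epoch_from_def)

lemma length_free_after: "length (free_after m) = c" by (simp add: free_after_def)

lemma sorted_free_after: "sorted (free_after m)" by (simp add: free_after_def)

lemma hd_free_after: "hd (free_after m) = departure m"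
proof (rule hd_sorted_eq_min[OF sorted_free_after])
  have e1: "server_of (departure m) - 1 + 1 = server_of (departure m)" using server_of_departure[of m] by auto
  have e2: "server_of (departure m) - 1 \<in> set [0..<c]" using server_of_departure[of m] by auto
  have "departure m = (\<lambda>j. next_epoch_from (j+1) (departure m)) (server_of (departure m) - 1)" using next_epoch_from_own_server[OF is_epoch_departure[of m]] e1 by simp
  then show "departure m \<in> set (free_after m)" unfolding free_after_def set_sort set_map by (rule image_eqI) (rule e2)
  show "\<forall>y\<in>set (free_after m). departure m \<le> y"
  proof
    fix y assume "y \<in> set (free_after m)"
    then obtain j where j: "j < c" "y = next_epoch_from (j+1) (departure m)" unfolding free_after_def by auto
    have "j + 1 \<in> {1..c}" using j by simp
    then show "departure m \<le> y" using next_epoch_from_ge j by blast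
  qed
qed

lemma Wv_eq_workload_free_after: "Wv c T0 T (idx m) = workload_vec c (a m) (free_after m)"
proof -
  have "workload_vec c (a m) (free_after m) = vec_of_list c (sort (map (\<lambda>y. max (y - a m) 0) (free_after m)))" by (simp add: workload_vec_def)
  also have "sort (map (\<lambda>y. max (y - a m) 0) (free_after m)) = sort (map (\<lambda>j. next_epoch_from (j+1) (departure m) - a m) [0..<c])"
  proof (rule sort_eq_if_mset_eq)
    have "map (\<lambda>y. max (y - a m) 0) (map (\<lambda>j. next_epoch_from (j+1) (departure m)) [0..<c]) = map (\<lambda>j. next_epoch_from (j+1) (departure m) - a m) [0..<c]"
    proof (unfold map_map o_def, rule map_cong[OF refl])
      fix j assume "j \<in> set [0..<c]"
      then have "departure m \<le> next_epoch_from (j+1) (departure m)" using next_epoch_from_ge by auto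
      then show "max (next_epoch_from (j+1) (departure m) - a m) 0 = next_epoch_from (j+1) (departure m) - a m" using a_less_departure[of m] by simp
    qed
    moreover have "mset (map (\<lambda>y. max (y - a m) 0) (free_after m)) = mset (map (\<lambda>y. max (y - a m) 0) (map (\<lambda>j. next_epoch_from (j+1) (departure m)) [0..<c]))"
      unfolding free_after_def mset_map mset_sort ..
    ultimately show "mset (map (\<lambda>y. max (y - a m) 0) (free_after m)) = mset (map (\<lambda>j. next_epoch_from (j+1) (departure m) - a m) [0..<c])"
      by (simp only:)
  qed
  finally show ?thesis using Wv_idx_eq[of m] by simp
qed

lemma Aint_eq: "Aint T0 (idx m) = a (m+1) - a m"
  by (simp add: Aint_def a_def reindex_def)

lemma mset_free_after_step:
  "mset (insort (next_epoch (server_of (departure m)) (departure m)) (tl (free_after m)))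
    = mset (map (\<lambda>j. next_epoch (j+1) (departure m)) [0..<c])"
proof -
  define i0 where "i0 = server_of (departure m)"
  have i0: "i0 \<in> {1..c}" "i0 - 1 < c" "i0 - 1 + 1 = i0"
    using server_of_departure[of m] unfolding i0_def by auto
  have ne: "free_after m \<noteq> []" using length_free_after[of m] c_pos by auto
  have "mset (map (\<lambda>j. next_epoch (j+1) (departure m)) [0..<c]) =
        add_mset (next_epoch (i0 - 1 + 1) (departure m))
          (mset (map (\<lambda>j. next_epoch_from (j+1) (departure m)) [0..<c]) - {#next_epoch_from (i0 - 1 + 1) (departure m)#})"
    by (rule mset_map_update[OF i0(2)]) (use next_epoch_from_other_server[OF is_epoch_departure[of m]] in \<open>auto simp: i0_def\<close>)
  also have "\<dots> = add_mset (next_epoch i0 (departure m)) (mset (free_after m) - {#departure m#})"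
    using next_epoch_from_own_server[OF is_epoch_departure[of m]] i0(3) unfolding i0_def by (simp add: free_after_def)
  also have "\<dots> = mset (insort (next_epoch i0 (departure m)) (tl (free_after m)))"
    using mset_tl[OF ne] hd_free_after by simp
  finally show ?thesis unfolding i0_def ..
qed

lemma kw_step_Wv:
  "kw_step c (Vs c T0 T (idx m)) (Aint T0 (idx m)) (Wv c T0 T (idx m))
    = vsort c (\<lambda>j. max (next_epoch (j+1) (departure m) - a (m+1)) 0)"
proof -
  have A: "Aint T0 (idx m) \<ge> 0" using Aint_eq by simp
  have "max (a m) (hd (free_after m)) + Vs c T0 T (idx m) = next_epoch (server_of (departure m)) (departure m)"
    unfolding hd_free_after Vs_idx_eq using a_less_departure[of m] by simp
  then have "kw_step c (Vs c T0 T (idx m)) (Aint T0 (idx m)) (Wv c T0 T (idx m))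
      = workload_vec c (a (m+1)) (insort (next_epoch (server_of (departure m)) (departure m)) (tl (free_after m)))"
    unfolding Wv_eq_workload_free_after
    using kw_step_workload_vec[OF length_free_after c_pos sorted_free_after A, of "Vs c T0 T (idx m)" "a m"]
    by (simp add: Aint_eq)
  also have "\<dots> = vsort c (\<lambda>j. max (next_epoch (j+1) (departure m) - a (m+1)) 0)"
    unfolding workload_vec_def vsort_eq_vec_of_list
    by (intro arg_cong[where f = "vec_of_list c"] sort_eq_if_mset_eq)
      (simp only: mset_map mset_free_after_step multiset.map_comp o_def)
  finally show ?thesis .
qed

lemma kw_step_Wv_le_Wv:
  "\<forall>i<c. kw_step c (Vs c T0 T (idx m)) (Aint T0 (idx m)) (Wv c T0 T (idx m)) i \<le> Wv c T0 T (idx (m+1)) i"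
proof -
  have "max (next_epoch (j+1) (departure m) - a (m+1)) 0 \<le> next_epoch_from (j+1) (departure (m+1)) - a (m+1)"
    if "j < c" for j
  proof -
    have j: "j + 1 \<in> {1..c}" using that by auto
    have "next_epoch (j+1) (departure m) \<le> next_epoch_from (j+1) (departure (m+1))"
      by (rule next_epoch_le_next_epoch_from[OF j]) (simp add: departure_strict)
    moreover have "a (m+1) \<le> next_epoch_from (j+1) (departure (m+1))"
      using next_epoch_from_ge[OF j, of "departure (m+1)"] a_less_departure[of "m+1"] by simp
    ultimately show ?thesis by simp
  qed
  then show ?thesis
    unfolding kw_step_Wv Wv_idx_eq[of "m+1"] vsort_eq_vec_of_list[symmetric] by (intro vsort_mono) simp
qed

lemma Wv_nonneg: "\<forall>i<c. Wv c T0 T (idx m) i \<ge> 0"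
  using workload_vec_nonneg[OF length_free_after] Wv_eq_workload_free_after by simp

lemma Wseq_zero_le_Wv: "\<forall>i<c. Wseq c T0 T (idx k') zerov d i \<le> Wv c T0 T (idx (k' + int d)) i"
proof (induction d)
  case 0 then show ?case using Wv_nonneg by (simp add: zerov_def)
next
  case (Suc d)
  have "\<forall>i<c. kw_step c (Vs c T0 T (idx (k' + int d))) (Aint T0 (idx (k' + int d))) (Wseq c T0 T (idx k') zerov d) i
     \<le> kw_step c (Vs c T0 T (idx (k' + int d))) (Aint T0 (idx (k' + int d))) (Wv c T0 T (idx (k' + int d))) i"
    by (rule kw_step_mono) (rule Suc.IH)
  note h = this kw_step_Wv_le_Wv[of "k' + int d"]
  have eq: "k' + int (Suc d) = (k' + int d) + 1" by simp
  show ?case unfolding eq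
  proof (intro allI impI)
    fix i assume "i < c"
    then show "Wseq c T0 T (idx k') zerov (Suc d) i \<le> Wv c T0 T (idx (k' + int d + 1)) i"
      using h by (simp del: of_nat_Suc) (meson order_trans)
  qed
qed

lemma Wseq_zerov_nonneg: "\<forall>i<c. Wseq c T0 T k zerov d i \<ge> 0"
  by (rule Wseq_nonneg) (simp add: zerov_def)

lemma Wseq_zero_coupled:
  assumes KK: "K' \<le> K" and KN: "K \<le> N"
    and couple: "Wseq c T0 T (idx K) (Wv c T0 T (idx K)) (nat (N - K)) = Wseq c T0 T (idx K) zerov (nat (N - K))"
  shows "Wseq c T0 T (idx K') zerov (nat (N - K')) = Wseq c T0 T (idx K) zerov (nat (N - K))"
proof -
  define X where "X = Wseq c T0 T (idx K') zerov (nat (K - K'))"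
  have split: "Wseq c T0 T (idx K') zerov (nat (N - K')) = Wseq c T0 T (idx K) X (nat (N - K))"
  proof -
    have "nat (N - K') = nat (K - K') + nat (N - K)" using KK KN by simp
    moreover have "idx (ordi (idx K') + int (nat (K - K'))) = idx K" using KK by simp
    ultimately show ?thesis unfolding X_def by (simp add: Wseq_add)
  qed
  have X1: "\<forall>i<c. X i \<le> Wv c T0 T (idx K) i"
    using Wseq_zero_le_Wv[of K' "nat (K - K')"] KK unfolding X_def by simp
  have X0: "\<forall>i<c. zerov i \<le> X i" using Wseq_zerov_nonneg unfolding X_def by (simp add: zerov_def)
  have lo: "\<forall>i<c. Wseq c T0 T (idx K) zerov (nat (N - K)) i \<le> Wseq c T0 T (idx K) X (nat (N - K)) i"
    by (rule Wseq_mono[OF X0])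
  have hi: "\<forall>i<c. Wseq c T0 T (idx K) X (nat (N - K)) i \<le> Wseq c T0 T (idx K) (Wv c T0 T (idx K)) (nat (N - K)) i"
    by (rule Wseq_mono[OF X1])
  have "Wseq c T0 T (idx K) X (nat (N - K)) = Wseq c T0 T (idx K) zerov (nat (N - K))"
  proof (rule vanishes_from_eqI)
    show "vanishes_from c (Wseq c T0 T (idx K) X (nat (N - K)))" unfolding X_def by (intro vanishes_from_Wseq vanishes_from_zerov)
    show "vanishes_from c (Wseq c T0 T (idx K) zerov (nat (N - K)))" by (intro vanishes_from_Wseq vanishes_from_zerov)
    show "\<forall>i<c. Wseq c T0 T (idx K) X (nat (N - K)) i = Wseq c T0 T (idx K) zerov (nat (N - K)) i"
      using lo hi couple by (metis order_antisym)
  qed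
  then show ?thesis using split by simp
qed

lemma Wseq_split:
  assumes "K \<le> N" "N \<le> M"
  shows "Wseq c T0 T (idx K) w (nat (M - K)) = Wseq c T0 T (idx N) (Wseq c T0 T (idx K) w (nat (N - K))) (nat (M - N))"
proof -
  have "nat (M - K) = nat (N - K) + nat (M - N)" using assms by simp
  moreover have "idx (ordi (idx K) + int (nat (N - K))) = idx N" using assms by simp
  ultimately show ?thesis by (simp add: Wseq_add)
qed

lemma Wseq_coupled_after:
  assumes "K \<le> N" "N \<le> M"
    and couple: "Wseq c T0 T (idx K) (Wv c T0 T (idx K)) (nat (N - K)) = Wseq c T0 T (idx K) zerov (nat (N - K))"
  shows "Wseq c T0 T (idx K) (Wv c T0 T (idx K)) (nat (M - K)) = Wseq c T0 T (idx K) zerov (nat (M - K))"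
  using couple by (simp add: Wseq_split[OF assms(1,2)])

lemma Wseq_zero_stable:
  assumes "K' \<le> K" "K \<le> N" "N \<le> M"
    and couple: "Wseq c T0 T (idx K) (Wv c T0 T (idx K)) (nat (N - K)) = Wseq c T0 T (idx K) zerov (nat (N - K))"
  shows "Wseq c T0 T (idx K') zerov (nat (M - K')) = Wseq c T0 T (idx K) zerov (nat (M - K))"
  using Wseq_zero_coupled[OF assms(1,2) couple] Wseq_split[of K' N M] Wseq_split[of K N M] assms by simp

section \<open>The FCFS multi-server queue\<close>

abbreviation "zf u q r j \<equiv> zfree c T0 T u q r j"
abbreviation "zs u q r j \<equiv> zstart c T0 T u q r j"
abbreviation "ze u q r j \<equiv> zend c T0 T u q r j"

lemma T0_idx: "T0 (idx m) = a m" by (simp add: a_def reindex_def)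

lemma zarr_eq: "zarr T0 u q j = max (a (ordi (zfirst T0 u q) + int j)) u"
  by (simp add: zarr_def zcust_def T0_idx)

lemma zarr_mono: "i \<le> j \<Longrightarrow> zarr T0 u q i \<le> zarr T0 u q j"
  unfolding zarr_eq by (intro max.mono) simp_all

lemma Vs_pos: "Vs c T0 T (idx m) > 0"
  unfolding Vs_idx_eq using next_epoch_gt server_of_departure by simp

lemma zf_length_sorted: "length (zf u q r j) = c \<and> sorted (zf u q r j)"
  using c_pos by (induction j) (auto simp: length_insort sorted_insort sorted_tl)

lemma zf_ne: "zf u q r j \<noteq> []"
  using zf_length_sorted[of u q r j] c_pos by auto

lemma zf_Suc: "zf u q r (Suc j) = insort (ze u q r j) (tl (zf u q r j))"
  by (simp add: zend_def zstart_def)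

lemma zs_ge_hd: "hd (zf u q r j) \<le> zs u q r j" by (simp add: zstart_def)

lemma zs_ge_arr: "zarr T0 u q j \<le> zs u q r j" by (simp add: zstart_def)

lemma ze_gt: "zs u q r j < ze u q r j" unfolding zend_def zcust_def using Vs_pos by simp

lemma hd_zf_mono_step: "hd (zf u q r j) \<le> hd (zf u q r (Suc j))"
  unfolding zf_Suc
proof (rule hd_le_hd_insort_tl)
  show "sorted (zf u q r j)" using zf_length_sorted by blast
  show "zf u q r j \<noteq> []" by (rule zf_ne)
  show "hd (zf u q r j) \<le> ze u q r j" using zs_ge_hd[of u q r j] ze_gt[of u q r j] by linarith
qed

lemma hd_zf_mono: "i \<le> j \<Longrightarrow> hd (zf u q r i) \<le> hd (zf u q r j)"
proof (induction j)
  case 0 then show ?case by simp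
next
  case (Suc j)
  then show ?case
    by (metis hd_zf_mono_step le_Suc_eq order_trans order_refl)
qed

lemma zs_mono: "i \<le> j \<Longrightarrow> zs u q r i \<le> zs u q r j"
  unfolding zstart_def by (intro max.mono zarr_mono hd_zf_mono)

lemma zarr_bound: "finite {j. zarr T0 u q j \<le> x}"
proof -
  let ?o = "ordi (zfirst T0 u q)"
  have "{j. zarr T0 u q j \<le> x} \<subseteq> {..nat (floor_index a x - ?o)}"
  proof
    fix j assume "j \<in> {j. zarr T0 u q j \<le> x}"
    then have "a (?o + int j) \<le> x" unfolding zarr_eq by simp
    then have "?o + int j \<le> floor_index a x" using le_floor_index_iff[OF unbounded_a] by blast
    then show "j \<in> {..nat (floor_index a x - ?o)}" by simp
  qed
  then show ?thesis by (rule finite_subset) simp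
qed

lemma zs_bound: "finite {j. zs u q r j \<le> x}"
  by (rule finite_subset[OF _ zarr_bound[of u q x]]) (auto intro: order_trans[OF zs_ge_arr])

lemma zs_set: "{j. zs u q r j \<le> x} = {..<card {j. zs u q r j \<le> x}}"
  by (rule down_closed_eq_lessThan[OF zs_bound]) (auto intro: order_trans[OF zs_mono])

lemma zs_card_le: "card {j. zs u q r j \<le> x} \<le> card {j. zarr T0 u q j \<le> x}"
  by (rule card_mono[OF zarr_bound]) (auto intro: order_trans[OF zs_ge_arr])

lemma zf_mset_balance: "mset (zf u q r s) + mset (map (\<lambda>j. hd (zf u q r j)) [0..<s])
   = mset (zf u q r 0) + mset (map (ze u q r) [0..<s])"
proof (induction s)
  case 0 then show ?case by simp
next
  case (Suc s)
  have "mset (zf u q r (Suc s)) = add_mset (ze u q r s) (mset (zf u q r s) - {#hd (zf u q r s)#})"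
    unfolding zf_Suc using mset_tl[OF zf_ne] by simp
  moreover have "hd (zf u q r s) \<in># mset (zf u q r s)" using zf_ne by simp
  ultimately have "mset (zf u q r (Suc s)) + {#hd (zf u q r s)#} = mset (zf u q r s) + {#ze u q r s#}"
    by simp
  note eq = this
  have "mset (zf u q r (Suc s)) + mset (map (\<lambda>j. hd (zf u q r j)) [0..<Suc s])
      = (mset (zf u q r (Suc s)) + {#hd (zf u q r s)#}) + mset (map (\<lambda>j. hd (zf u q r j)) [0..<s])"
    by (simp add: ac_simps)
  also have "\<dots> = (mset (zf u q r s) + mset (map (\<lambda>j. hd (zf u q r j)) [0..<s])) + {#ze u q r s#}"
    unfolding eq by (simp add: ac_simps)
  also have "\<dots> = mset (zf u q r 0) + mset (map (ze u q r) [0..<s]) + {#ze u q r s#}"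
    unfolding Suc.IH ..
  also have "\<dots> = mset (zf u q r 0) + mset (map (ze u q r) [0..<Suc s])" by (simp add: ac_simps)
  finally show ?case .
qed

definition residuals :: "real \<Rightarrow> nat \<Rightarrow> (nat \<Rightarrow> real) \<Rightarrow> real \<Rightarrow> real list" where
  "residuals u q r x = sort (map (\<lambda>i. u + r i - x) (filter (\<lambda>i. x < u + r i) [0..<c]) @
                    map (\<lambda>j. ze u q r j - x)
                      (filter (\<lambda>j. zs u q r j \<le> x \<and> x < ze u q r j) [0..<card {j. zarr T0 u q j \<le> x}]))"

definition waiting :: "real \<Rightarrow> nat \<Rightarrow> (nat \<Rightarrow> real) \<Rightarrow> real \<Rightarrow> nat" where
  "waiting u q r x = card {j. zarr T0 u q j \<le> x \<and> x < zs u q r j}"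

definition since_arrival :: "real \<Rightarrow> real \<Rightarrow> real \<Rightarrow> real" where
  "since_arrival u e x = (if (\<exists>n. n \<noteq> 0 \<and> u < T0 n \<and> T0 n \<le> x)
           then x - Sup {T0 n | n. n \<noteq> 0 \<and> T0 n \<le> x} else e + (x - u))"

lemma since_arrival_add: "since_arrival u e (u + t) = (if (\<exists>n. n \<noteq> 0 \<and> u < T0 n \<and> T0 n \<le> u + t)
           then u + t - Sup {T0 n | n. n \<noteq> 0 \<and> T0 n \<le> u + t} else e + t)"
  unfolding since_arrival_def by auto

lemma Zu_unfold: "Zu c T0 T u t (q, r, e) =
   (waiting u q r (u + t), vec_of_list c (replicate (c - length (residuals u q r (u+t))) 0 @ residuals u q r (u+t)), since_arrival u e (u + t))"
  unfolding Zu_def Let_def waiting_def residuals_def since_arrival_add vec_of_list_def by simp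

lemma residuals_mset: "mset (residuals u q r x) = image_mset (\<lambda>y. y - x) (filter_mset (\<lambda>y. x < y) (mset (zf u q r (card {j. zs u q r j \<le> x}))))"
proof -
  define s where "s = card {j. zs u q r j \<le> x}"
  define N where "N = card {j. zarr T0 u q j \<le> x}"
  have sN: "s \<le> N" unfolding s_def N_def by (rule zs_card_le)
  have sset: "\<And>j. zs u q r j \<le> x \<longleftrightarrow> j < s" using zs_set[of u q r x] unfolding s_def by blast
  have f1: "filter (\<lambda>j. zs u q r j \<le> x \<and> x < ze u q r j) [0..<N] = filter (\<lambda>j. x < ze u q r j) [0..<s]"
    unfolding sset by (rule filter_upt_prefix[OF sN])
  have m1: "mset (map (\<lambda>i. u + r i - x) (filter (\<lambda>i. x < u + r i) [0..<c]))
      = image_mset (\<lambda>y. y - x) (filter_mset (\<lambda>y. x < y) (mset (zf u q r 0)))"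
    by (simp add: mset_filter filter_mset_image_mset image_mset.compositionality o_def)
  have m2: "mset (map (\<lambda>j. ze u q r j - x) (filter (\<lambda>j. x < ze u q r j) [0..<s]))
      = image_mset (\<lambda>y. y - x) (filter_mset (\<lambda>y. x < y) (mset (map (ze u q r) [0..<s])))"
    by (simp add: mset_filter filter_mset_image_mset image_mset.compositionality o_def)
  have H0: "filter_mset (\<lambda>y. x < y) (mset (map (\<lambda>j. hd (zf u q r j)) [0..<s])) = {#}"
  proof -
    have "\<forall>j\<in>set [0..<s]. \<not> x < hd (zf u q r j)"
    proof
      fix j assume "j \<in> set [0..<s]"
      then have "zs u q r j \<le> x" using sset by simp
      then show "\<not> x < hd (zf u q r j)" using zs_ge_hd[of u q r j] by linarith
    qed
    then have "filter (\<lambda>y. x < y) (map (\<lambda>j. hd (zf u q r j)) [0..<s]) = []"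
      by (auto simp: filter_empty_conv)
    then have "mset (filter (\<lambda>y. x < y) (map (\<lambda>j. hd (zf u q r j)) [0..<s])) = {#}" by simp
    then show ?thesis by simp
  qed
  have "filter_mset (\<lambda>y. x < y) (mset (zf u q r s)) =
        filter_mset (\<lambda>y. x < y) (mset (zf u q r s) + mset (map (\<lambda>j. hd (zf u q r j)) [0..<s]))"
    using H0 by simp
  also have "\<dots> = filter_mset (\<lambda>y. x < y) (mset (zf u q r 0)) + filter_mset (\<lambda>y. x < y) (mset (map (ze u q r) [0..<s]))"
    unfolding zf_mset_balance by simp
  finally have F: "filter_mset (\<lambda>y. x < y) (mset (zf u q r s)) =
     filter_mset (\<lambda>y. x < y) (mset (zf u q r 0)) + filter_mset (\<lambda>y. x < y) (mset (map (ze u q r) [0..<s]))" .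
  show ?thesis
    unfolding residuals_def mset_sort mset_append N_def[symmetric] f1 m1 m2 s_def[symmetric] F by simp
qed

lemma zs_map_max: "al \<le> zarr T0 u q j \<Longrightarrow> zs u q r j = max (zarr T0 u q j) (hd (map (max al) (zf u q r j)))"
  unfolding zstart_def using zf_ne[of u q r j] by (cases "zf u q r j") (auto simp: max_def)

lemma coupled_free_times:
  assumes cust: "\<forall>i. zcust T0 u1 q1 (j1+i) = zcust T0 u2 q2 (j2+i)"
    and arr: "\<forall>i. zarr T0 u1 q1 (j1+i) = zarr T0 u2 q2 (j2+i)"
    and arrge: "\<forall>i. al \<le> zarr T0 u1 q1 (j1+i)"
    and init: "map (max al) (zf u1 q1 r1 j1) = map (max al) (zf u2 q2 r2 j2)"
  shows "map (max al) (zf u1 q1 r1 (j1+i)) = map (max al) (zf u2 q2 r2 (j2+i)) \<and> zs u1 q1 r1 (j1+i) = zs u2 q2 r2 (j2+i)"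
proof (induction i)
  case 0
  have "zs u1 q1 r1 j1 = zs u2 q2 r2 j2"
    using zs_map_max[of al u1 q1 j1 r1] zs_map_max[of al u2 q2 j2 r2] arr arrge init by (metis add_0_right)
  then show ?case using init by simp
next
  case (Suc i)
  have ge2: "al \<le> zarr T0 u2 q2 (j2+i)" using arrge arr by metis
  have zs_eq: "zs u1 q1 r1 (j1+i) = zs u2 q2 r2 (j2+i)" using Suc.IH by blast
  have ze_eq: "ze u1 q1 r1 (j1+i) = ze u2 q2 r2 (j2+i)"
    unfolding zend_def using zs_eq cust by simp
  have mono: "mono (max al)" by (auto simp: mono_def)
  have L: "map (max al) (zf u1 q1 r1 (j1 + Suc i)) = map (max al) (zf u2 q2 r2 (j2 + Suc i))"
  proof (rule sorted_mset_eq)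
    show "sorted (map (max al) (zf u1 q1 r1 (j1 + Suc i)))"
      by (rule sorted_map_mono[OF zf_length_sorted[THEN conjunct2]]) (auto simp: mono_on_def)
    show "sorted (map (max al) (zf u2 q2 r2 (j2 + Suc i)))"
      by (rule sorted_map_mono[OF zf_length_sorted[THEN conjunct2]]) (auto simp: mono_on_def)
    have "mset (map (max al) (zf u1 q1 r1 (j1 + Suc i))) = add_mset (max al (ze u1 q1 r1 (j1+i))) (mset (tl (map (max al) (zf u1 q1 r1 (j1+i)))))"
      by (simp only: add_Suc_right zf_Suc mset_map mset_insort image_mset_add_mset map_tl[symmetric])
    also have "\<dots> = add_mset (max al (ze u2 q2 r2 (j2+i))) (mset (tl (map (max al) (zf u2 q2 r2 (j2+i)))))"
      using ze_eq Suc.IH by simp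
    also have "\<dots> = mset (map (max al) (zf u2 q2 r2 (j2 + Suc i)))"
      by (simp only: add_Suc_right zf_Suc mset_map mset_insort image_mset_add_mset map_tl[symmetric])
    finally show "mset (map (max al) (zf u1 q1 r1 (j1 + Suc i))) = mset (map (max al) (zf u2 q2 r2 (j2 + Suc i)))" .
  qed
  moreover have "zs u1 q1 r1 (j1 + Suc i) = zs u2 q2 r2 (j2 + Suc i)"
  proof -
    have g1: "al \<le> zarr T0 u1 q1 (j1 + Suc i)" using arrge by blast
    have g2: "al \<le> zarr T0 u2 q2 (j2 + Suc i)" using arrge arr by metis
    show ?thesis using zs_map_max[OF g1, of r1] zs_map_max[OF g2, of r2] L arr by metis
  qed
  ultimately show ?case by blast
qed

lemma coupled_state:
  assumes cust: "\<forall>i. zcust T0 u1 q1 (j1+i) = zcust T0 u2 q2 (j2+i)"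
    and arr: "\<forall>i. zarr T0 u1 q1 (j1+i) = zarr T0 u2 q2 (j2+i)"
    and arrge: "\<forall>i. al \<le> zarr T0 u1 q1 (j1+i)"
    and init: "map (max al) (zf u1 q1 r1 j1) = map (max al) (zf u2 q2 r2 j2)"
    and alx: "al \<le> x" and sx: "zs u1 q1 r1 j1 \<le> x"
  shows "waiting u1 q1 r1 x = waiting u2 q2 r2 x \<and> residuals u1 q1 r1 x = residuals u2 q2 r2 x"
proof -
  note cmp = coupled_free_times[OF cust arr arrge init]
  have sx2: "zs u2 q2 r2 j2 \<le> x" using cmp[of 0] sx by simp
  have pre1: "\<forall>j<j1. zs u1 q1 r1 j \<le> x" using zs_mono[of _ j1 u1 q1 r1] sx by (meson less_imp_le order_trans)
  have pre2: "\<forall>j<j2. zs u2 q2 r2 j \<le> x" using zs_mono[of _ j2 u2 q2 r2] sx2 by (meson less_imp_le order_trans)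
  have seteq: "{i. zs u1 q1 r1 (j1 + i) \<le> x} = {i. zs u2 q2 r2 (j2 + i) \<le> x}" using cmp by simp
  define s' where "s' = card {i. zs u1 q1 r1 (j1 + i) \<le> x}"
  have s1: "card {j. zs u1 q1 r1 j \<le> x} = j1 + s'"
    unfolding s'_def by (rule card_Collect_prefix[OF zs_bound pre1])
  have s2: "card {j. zs u2 q2 r2 j \<le> x} = j2 + s'"
    unfolding s'_def seteq by (rule card_Collect_prefix[OF zs_bound pre2])
  have "mset (residuals u1 q1 r1 x) = mset (residuals u2 q2 r2 x)"
    unfolding residuals_mset s1 s2
    using filter_mset_greater_map_max[OF alx, of "zf u1 q1 r1 (j1 + s')"] filter_mset_greater_map_max[OF alx, of "zf u2 q2 r2 (j2 + s')"] cmp[of s']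
    by metis
  then have R: "residuals u1 q1 r1 x = residuals u2 q2 r2 x"
    by (intro sorted_mset_eq) (simp_all add: residuals_def)
  have "waiting u1 q1 r1 x = card {i. zarr T0 u1 q1 (j1+i) \<le> x \<and> x < zs u1 q1 r1 (j1+i)}"
    unfolding waiting_def by (rule card_Collect_shift) (use pre1 in auto)
  also have "\<dots> = card {i. zarr T0 u2 q2 (j2+i) \<le> x \<and> x < zs u2 q2 r2 (j2+i)}"
    using cmp arr by simp
  also have "\<dots> = waiting u2 q2 r2 x"
    unfolding waiting_def by (rule card_Collect_shift[symmetric]) (use pre2 in auto)
  finally show ?thesis using R by simp
qed

lemma workload_free_times_Wseq:
  assumes cust: "\<forall>i. zcust T0 u q (j0 + i) = idx (M + int i)"
    and arr: "\<forall>i. zarr T0 u q (j0 + i) = a (M + int i)"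
  shows "workload_vec c (a (M + int i)) (zf u q r (j0 + i)) = Wseq c T0 T (idx M) (workload_vec c (a M) (zf u q r j0)) i"
proof (induction i)
  case 0 then show ?case by simp
next
  case (Suc i)
  have A: "Aint T0 (idx (M + int i)) \<ge> 0" using Aint_eq by simp
  have "Wseq c T0 T (idx M) (workload_vec c (a M) (zf u q r j0)) (Suc i)
      = kw_step c (Vs c T0 T (idx (M + int i))) (Aint T0 (idx (M + int i))) (workload_vec c (a (M + int i)) (zf u q r (j0 + i)))"
    using Suc.IH by simp
  also have "\<dots> = workload_vec c (a (M + int i) + Aint T0 (idx (M + int i)))
      (insort (max (a (M + int i)) (hd (zf u q r (j0 + i))) + Vs c T0 T (idx (M + int i))) (tl (zf u q r (j0 + i))))"
    by (rule kw_step_workload_vec[OF _ c_pos _ A]) (use zf_length_sorted in auto)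
  also have "insort (max (a (M + int i)) (hd (zf u q r (j0 + i))) + Vs c T0 T (idx (M + int i))) (tl (zf u q r (j0 + i)))
      = zf u q r (j0 + Suc i)"
    using cust arr by (simp add: zend_def zstart_def)
  also have "a (M + int i) + Aint T0 (idx (M + int i)) = a (M + int (Suc i))"
    by (simp add: Aint_eq algebra_simps)
  finally show ?case by simp
qed

lemma zs_eq_workload: "zs u q r j = zarr T0 u q j + workload_vec c (zarr T0 u q j) (zf u q r j) 0"
  using workload_vec_0[of "zf u q r j" c "zarr T0 u q j"] zf_length_sorted[of u q r j] c_pos
  by (simp add: zstart_def max_def)

lemma T0_eq_a_ordi: "n \<noteq> 0 \<Longrightarrow> T0 n = a (ordi n)"
  by (simp add: a_def reindex_def)

lemma zfirst_zero:
  assumes lo: "a (K - 1) < u" and hi: "u \<le> a K"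
  shows "zfirst T0 u 0 = idx K"
  unfolding zfirst_def
proof (simp, rule the_equality)
  show "idx K \<noteq> 0 \<and> u \<le> T0 (idx K) \<and> (\<forall>m. m \<noteq> 0 \<longrightarrow> m < idx K \<longrightarrow> T0 m < u)"
  proof (intro conjI allI impI)
    show "u \<le> T0 (idx K)" using hi by (simp add: T0_idx)
    fix m assume m: "m \<noteq> 0" "m < idx K"
    then have "ordi m < K" using idx_less_iff[of "ordi m" K] by simp
    then have "a (ordi m) \<le> a (K - 1)" by simp
    moreover have "T0 m = a (ordi m)" using m(1) by (rule T0_eq_a_ordi)
    ultimately show "T0 m < u" using lo by linarith
  qed simp
next
  fix j assume j: "j \<noteq> 0 \<and> u \<le> T0 j \<and> (\<forall>m. m \<noteq> 0 \<longrightarrow> m < j \<longrightarrow> T0 m < u)"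
  have "\<not> ordi j < K"
  proof
    assume "ordi j < K"
    then have "a (ordi j) \<le> a (K - 1)" by simp
    moreover have "T0 j = a (ordi j)" using j by (intro T0_eq_a_ordi) simp
    ultimately show False using j lo by linarith
  qed
  moreover have "\<not> K < ordi j"
  proof
    assume "K < ordi j"
    then have "idx K < j" using idx_less_iff[of K "ordi j"] j by simp
    then have "T0 (idx K) < u" using j by simp
    then show False using hi by (simp add: T0_idx)
  qed
  ultimately have "ordi j = K" by simp
  then show "j = idx K" using j idx_ordi[of j] by simp
qed

lemma zfirst_pos:
  assumes q: "q \<ge> 1" shows "zfirst T0 (a K) q = idx (K - int q + 1)"
proof -
  have "(THE j. j \<noteq> 0 \<and> T0 j \<le> a K \<and> (\<forall>m. m \<noteq> 0 \<longrightarrow> j < m \<longrightarrow> a K < T0 m)) = idx K"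
  proof (rule the_equality)
    show "idx K \<noteq> 0 \<and> T0 (idx K) \<le> a K \<and> (\<forall>m. m \<noteq> 0 \<longrightarrow> idx K < m \<longrightarrow> a K < T0 m)"
    proof (intro conjI allI impI)
      fix m assume m: "m \<noteq> 0" "idx K < m"
      then have "K < ordi m" using idx_less_iff[of K "ordi m"] by simp
      then show "a K < T0 m" using m T0_eq_a_ordi by simp
    qed (simp_all add: T0_idx)
  next
    fix j assume j: "j \<noteq> 0 \<and> T0 j \<le> a K \<and> (\<forall>m. m \<noteq> 0 \<longrightarrow> j < m \<longrightarrow> a K < T0 m)"
    have "T0 j = a (ordi j)" using j by (intro T0_eq_a_ordi) simp
    then have "ordi j \<le> K" using j by simp
    moreover have "\<not> ordi j < K"
    proof
      assume "ordi j < K"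
      then have "j < idx K" using idx_less_iff[of "ordi j" K] j by simp
      then have "a K < T0 (idx K)" using j by simp
      then show False by (simp add: T0_idx)
    qed
    ultimately have "ordi j = K" by simp
    then show "j = idx K" using j idx_ordi[of j] by simp
  qed
  then show ?thesis using q unfolding zfirst_def by simp
qed

lemma Sup_arrivals_le: "Sup {T0 n | n. n \<noteq> 0 \<and> T0 n \<le> x} = a (floor_index a x)"
proof (rule cSup_eq_maximum)
  show "a (floor_index a x) \<in> {T0 n | n. n \<noteq> 0 \<and> T0 n \<le> x}"
    using floor_index_spec[OF unbounded_a, of x] by (auto simp: T0_idx intro!: exI[of _ "idx (floor_index a x)"])
next
  fix y assume "y \<in> {T0 n | n. n \<noteq> 0 \<and> T0 n \<le> x}"
  then obtain n where n: "n \<noteq> 0" "T0 n \<le> x" "y = T0 n" by auto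
  then have "ordi n \<le> floor_index a x" using le_floor_index_iff[OF unbounded_a] T0_eq_a_ordi by simp
  then show "y \<le> a (floor_index a x)" using n T0_eq_a_ordi by simp
qed

lemma since_arrival_eq:
  assumes ux: "u \<le> x"
  shows "since_arrival u (u - a (floor_index a u)) x = x - a (floor_index a x)"
proof (cases "\<exists>n. n \<noteq> 0 \<and> u < T0 n \<and> T0 n \<le> x")
  case True then show ?thesis by (simp add: since_arrival_def Sup_arrivals_le)
next
  case False
  have "floor_index a x \<le> floor_index a u"
  proof (rule ccontr)
    assume "\<not> floor_index a x \<le> floor_index a u"
    then have "u < a (floor_index a x)" using floor_index_less_iff[OF unbounded_a, of u "floor_index a x"] by simp
    moreover have "a (floor_index a x) \<le> x" using floor_index_spec[OF unbounded_a] by blast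
    ultimately show False using False T0_idx by (metis idx_nz)
  qed
  moreover have "floor_index a u \<le> floor_index a x" using floor_index_mono[OF unbounded_a ux] .
  ultimately have "floor_index a x = floor_index a u" by simp
  then show ?thesis unfolding since_arrival_def using False by (simp only: if_False)
qed

lemma since_arrival_zero: "u = a K \<Longrightarrow> u \<le> x \<Longrightarrow> since_arrival u 0 x = x - a (floor_index a x)"
  using since_arrival_eq[of u x] by simp

lemma arrival_bracket: assumes "u \<le> a K" shows "\<exists>K'. K' \<le> K \<and> a (K' - 1) < u \<and> u \<le> a K'"
proof -
  define j where "j = floor_index a u"
  have j: "a j \<le> u" "u < a (j+1)" using floor_index_spec[OF unbounded_a, of u] unfolding j_def by auto
  show ?thesis
  proof (cases "a j = u")
    case True
    have "a (j - 1) < a j" by simp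
    moreover have "j \<le> K" using True assms by (metis a_le_iff)
    ultimately show ?thesis using True by (intro exI[of _ j]) auto
  next
    case False
    then have lt: "a j < u" using j by simp
    have "j + 1 \<le> K"
    proof (rule ccontr)
      assume "\<not> j + 1 \<le> K" then have "K \<le> j" by simp
      then have "a K \<le> a j" by simp
      then show False using lt assms by linarith
    qed
    then show ?thesis using lt j by (intro exI[of _ "j+1"]) auto
  qed
qed

section \<open>Empty and vacation initial states\<close>

lemma last_epoch_const:
  assumes st: "s \<le> t" and eq: "epochs s = epochs t" and i: "i \<in> {1..c}"
  shows "last_epoch i s = last_epoch i t"
proof -
  have nn: "0 \<le> last_epoch j t - last_epoch j s" if "j \<in> {1..c}" for j using last_epoch_mono[OF that st] by simp
  have "(\<Sum>j\<in>{1..c}. last_epoch j t - last_epoch j s) = 0" using eq by (simp add: epochs_def sum_subtractf)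
  then have "\<forall>j\<in>{1..c}. last_epoch j t - last_epoch j s = 0" using sum_nonneg_eq_0_iff[of "{1..c}" "\<lambda>j. last_epoch j t - last_epoch j s", OF finite_atLeastAtMost nn] by blast
  then show ?thesis using i by simp
qed

lemma next_epoch_const: "s \<le> t \<Longrightarrow> epochs s = epochs t \<Longrightarrow> i \<in> {1..c} \<Longrightarrow> next_epoch i s = next_epoch i t"
  unfolding next_epoch_def using last_epoch_const by simp

lemma next_any_epoch_server: "server_of (next_any_epoch t) \<in> {1..c} \<and> next_any_epoch t = next_epoch (server_of (next_any_epoch t)) t"
proof -
  have ne: "{1..c} \<noteq> {}" using c_pos by auto
  have "next_any_epoch t \<in> (\<lambda>i. next_epoch i t) ` {1..c}" unfolding next_any_epoch_def using ne by (intro Min_in) auto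
  then obtain i0 where i0: "i0 \<in> {1..c}" "next_any_epoch t = next_epoch i0 t" by auto
  have "server_of (next_any_epoch t) = i0" using server_of_unique[OF i0(1), of "last_epoch i0 t + 1"] i0 by (simp add: next_epoch_def)
  then show ?thesis using i0 by simp
qed

lemma next_any_epoch_le: "i \<in> {1..c} \<Longrightarrow> next_any_epoch t \<le> next_epoch i t"
  unfolding next_any_epoch_def by (rule Min_le) auto

lemma next_epoch_from_next_any: assumes i: "i \<in> {1..c}" shows "next_epoch_from i (next_any_epoch t) = next_epoch i t"
proof (cases "i = server_of (next_any_epoch t)")
  case True
  then have e: "next_any_epoch t = next_epoch i t" using next_any_epoch_server[of t] by simp
  then have "\<exists>j. b i j = next_any_epoch t" unfolding next_epoch_def by (intro exI[of _ "last_epoch i t + 1"]) simp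
  then show ?thesis unfolding next_epoch_from_def using e by simp
next
  case False
  have np: "\<not> (\<exists>j. b i j = next_any_epoch t)"
  proof
    assume "\<exists>j. b i j = next_any_epoch t" then obtain j where "b i j = next_any_epoch t" by blast
    then show False using server_of_unique[OF i] False by metis
  qed
  have ne: "next_any_epoch t \<noteq> next_epoch i t" using np by (auto simp: next_epoch_def)
  have lt: "next_any_epoch t < next_epoch i t" using next_any_epoch_le[OF i, of t] ne by simp
  have "last_epoch i (next_any_epoch t) = last_epoch i t"
    by (rule last_epoch_unique[OF i]) (use b_last_epoch_le[OF i, of t] next_any_epoch_props(1)[of t] lt in \<open>auto simp: next_epoch_def\<close>)
  then show ?thesis using np by (simp add: next_epoch_from_def next_epoch_def)
qed

lemma mset_next_epochs_step:
  "mset (map (\<lambda>i. next_epoch (i+1) (next_any_epoch t)) [0..<c])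
   = add_mset (next_epoch (server_of (next_any_epoch t)) (next_any_epoch t)) (mset (map (\<lambda>i. next_epoch (i+1) t) [0..<c]) - {#next_any_epoch t#})"
proof -
  define p where "p = next_any_epoch t"
  define i0 where "i0 = server_of p"
  have sp: "is_epoch p" unfolding p_def using next_any_epoch_props(2) .
  have i0: "i0 \<in> {1..c}" using next_any_epoch_server unfolding i0_def p_def by blast
  have pc: "i0 - 1 < c" using i0 by auto
  have e: "i0 - 1 + 1 = i0" using i0 by auto
  have "map (\<lambda>i. next_epoch (i+1) t) [0..<c] = map (\<lambda>i. next_epoch_from (i+1) p) [0..<c]"
    unfolding p_def by (rule map_cong[OF refl]) (simp add: next_epoch_from_next_any)
  moreover have "mset (map (\<lambda>i. next_epoch (i+1) p) [0..<c]) =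
     add_mset (next_epoch (i0 - 1 + 1) p) (mset (map (\<lambda>i. next_epoch_from (i+1) p) [0..<c]) - {#next_epoch_from (i0 - 1 + 1) p#})"
    by (rule mset_map_update[OF pc]) (use next_epoch_from_other_server[OF sp] i0 in \<open>auto simp: i0_def\<close>)
  ultimately have m: "map (\<lambda>i. next_epoch (i+1) t) [0..<c] = map (\<lambda>i. next_epoch_from (i+1) p) [0..<c]"
    "mset (map (\<lambda>i. next_epoch (i+1) p) [0..<c]) =
     add_mset (next_epoch i0 p) (mset (map (\<lambda>i. next_epoch_from (i+1) p) [0..<c]) - {#next_epoch_from i0 p#})" unfolding e by blast+
  have "next_epoch_from i0 p = p" unfolding i0_def by (rule next_epoch_from_own_server[OF sp])
  then have "mset (map (\<lambda>i. next_epoch (i+1) p) [0..<c]) =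
     add_mset (next_epoch i0 p) (mset (map (\<lambda>i. next_epoch (i+1) t) [0..<c]) - {#p#})"
    unfolding m(1) using m(2) by (simp only:)
  then show ?thesis unfolding p_def i0_def .
qed

lemma hd_eq_next_any_epoch:
  assumes so: "sorted L" and ms: "mset L = mset (map (\<lambda>i. next_epoch (i+1) t) [0..<c])"
  shows "hd L = next_any_epoch t"
proof (rule hd_sorted_eq_min[OF so])
  have "set L = set (map (\<lambda>i. next_epoch (i+1) t) [0..<c])" by (rule mset_eq_setD[OF ms])
  then have sL: "set L = (\<lambda>i. next_epoch (i+1) t) ` {0..<c}" by simp
  define i0 where "i0 = server_of (next_any_epoch t)"
  have i0: "i0 \<in> {1..c}" "next_any_epoch t = next_epoch i0 t" using next_any_epoch_server[of t] unfolding i0_def by auto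
  have e: "i0 - 1 + 1 = i0" "i0 - 1 \<in> {0..<c}" using i0(1) by auto
  have "next_any_epoch t = (\<lambda>i. next_epoch (i+1) t) (i0 - 1)" using i0(2) e(1) by simp
  then show "next_any_epoch t \<in> set L" unfolding sL using e(2) by (rule image_eqI)
  show "\<forall>y\<in>set L. next_any_epoch t \<le> y"
  proof
    fix y assume "y \<in> set L"
    then obtain i where "i \<in> {0..<c}" "y = next_epoch (i+1) t" unfolding sL by blast
    then show "next_any_epoch t \<le> y" using next_any_epoch_le[of "i+1" t] by simp
  qed
qed

lemma workload_vec_zero_init:
  assumes "u \<le> al" shows "workload_vec c al (zf u q zerov 0) = zerov"
proof -
  have "map (\<lambda>y. max (y - al) 0) (zf u q zerov 0) = replicate c 0"
    using assms by (simp add: zerov_def map_replicate_const[symmetric] sort_map_mono)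
      (rule nth_equalityI, auto)
  then show ?thesis by (simp add: workload_vec_def vec_of_list_def zerov_def fun_eq_iff)
qed

lemma zero_start_schedule:
  assumes lo: "a (K - 1) < u" and hi: "u \<le> a K"
  shows "zcust T0 u 0 j = idx (K + int j)" "zarr T0 u 0 j = a (K + int j)"
    "workload_vec c (a K) (zf u 0 zerov 0) = zerov"
proof -
  have zf: "zfirst T0 u 0 = idx K" by (rule zfirst_zero[OF lo hi])
  show c1: "zcust T0 u 0 j = idx (K + int j)" by (simp add: zcust_def zf)
  have "a K \<le> a (K + int j)" by simp
  then have "u \<le> a (K + int j)" using hi by linarith
  then show "zarr T0 u 0 j = a (K + int j)" by (simp add: zarr_def c1 T0_idx)
  show "workload_vec c (a K) (zf u 0 zerov 0) = zerov" by (rule workload_vec_zero_init[OF hi])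
qed

definition vac_queue :: "int \<Rightarrow> nat" where "vac_queue K = Qv c T0 T (a K)"

definition vac_residual :: "int \<Rightarrow> nat \<Rightarrow> real" where "vac_residual K = vsort c (Uvec c T (a K))"

lemma int_vac_queue: "int (vac_queue K) = dep_level K - epochs (a K)" unfolding vac_queue_def by (rule Qv_arrival_dep_level)

lemma vac_queue_pos: "vac_queue K \<ge> 1" using int_vac_queue[of K] epochs_less_dep_level[of K] by simp

lemma vac_zcust: "zcust T0 (a K) (vac_queue K) j = idx (K - int (vac_queue K) + 1 + int j)"
  by (simp add: zcust_def zfirst_pos[OF vac_queue_pos])

lemma vac_zarr: "zarr T0 (a K) (vac_queue K) j = max (a (K - int (vac_queue K) + 1 + int j)) (a K)"
  by (simp add: zarr_def vac_zcust T0_idx)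

lemma vac_free_mset_0: "mset (zf (a K) (vac_queue K) (vac_residual K) 0) = mset (map (\<lambda>i. next_epoch (i+1) (epoch_with (epochs (a K)))) [0..<c])"
proof -
  let ?u = "a K"
  let ?S = "sort (map (Uvec c T ?u) [0..<c])"
  have "map (\<lambda>i. ?u + vac_residual K i) [0..<c] = map (\<lambda>y. ?u + y) ?S"
    by (rule nth_equalityI) (auto simp: vac_residual_def vsort_def)
  then have "mset (zf ?u (vac_queue K) (vac_residual K) 0) = image_mset (\<lambda>y. ?u + y) (mset (map (Uvec c T ?u) [0..<c]))"
    by simp
  also have "\<dots> = mset (map (\<lambda>i. next_epoch (i+1) ?u) [0..<c])"
  proof -
    have "map (\<lambda>i. ?u + Uvec c T ?u i) [0..<c] = map (\<lambda>i. next_epoch (i+1) ?u) [0..<c]"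
    proof (rule map_cong[OF refl])
      fix i assume "i \<in> set [0..<c]"
      then have "i < c" "i + 1 \<in> {1..c}" by auto
      then show "?u + Uvec c T ?u i = next_epoch (i+1) ?u" by (simp add: Uvec_def U_eq)
    qed
    then show ?thesis by (simp only: mset_map[symmetric] map_map o_def)
  qed
  also have "map (\<lambda>i. next_epoch (i+1) ?u) [0..<c] = map (\<lambda>i. next_epoch (i+1) (epoch_with (epochs ?u))) [0..<c]"
  proof (rule map_cong[OF refl])
    fix i assume "i \<in> set [0..<c]"
    then have i: "i + 1 \<in> {1..c}" by auto
    show "next_epoch (i+1) ?u = next_epoch (i+1) (epoch_with (epochs ?u))"
      by (rule next_epoch_const[symmetric, OF epoch_with_epochs_le _ i]) (simp add: epoch_with_spec)
  qed
  finally show ?thesis .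
qed

text \<open>While the initially waiting customers are served, each server is free exactly at its next
  service epoch.\<close>

lemma vac_free_mset:
  "j < vac_queue K \<Longrightarrow> mset (zf (a K) (vac_queue K) (vac_residual K) j) = mset (map (\<lambda>i. next_epoch (i+1) (epoch_with (epochs (a K) + int j))) [0..<c])"
proof (induction j)
  case 0 then show ?case using vac_free_mset_0 by simp
next
  case (Suc j)
  define t where "t = epoch_with (epochs (a K) + int j)"
  define m where "m = K - int (vac_queue K) + 1 + int j"
  have IH: "mset (zf (a K) (vac_queue K) (vac_residual K) j) = mset (map (\<lambda>i. next_epoch (i+1) t) [0..<c])"
    using Suc by (simp add: t_def)
  have St: "epochs t = epochs (a K) + int j" unfolding t_def using epoch_with_spec by simp
  have hd: "hd (zf (a K) (vac_queue K) (vac_residual K) j) = next_any_epoch t"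
    by (rule hd_eq_next_any_epoch[OF zf_length_sorted[THEN conjunct2] IH])
  have nSt: "next_any_epoch t = epoch_with (epochs (a K) + int j + 1)" using next_any_epoch_eq[of t] St by simp
  have gt: "a K < next_any_epoch t"
  proof (rule ccontr)
    assume "\<not> a K < next_any_epoch t"
    then have "epochs (next_any_epoch t) \<le> epochs (a K)" using epochs_mono by simp
    then show False using next_any_epoch_props(3)[of t] St by simp
  qed
  have arr: "zarr T0 (a K) (vac_queue K) j = a K" unfolding vac_zarr using Suc.prems by simp
  have zs: "zs (a K) (vac_queue K) (vac_residual K) j = next_any_epoch t" unfolding zstart_def arr hd using gt by simp
  have sgm: "dep_level m = epochs (a K) + int j + 1"
  proof -
    have "int (vac_queue K - 1 - j) \<le> dep_level K - epochs (a K) - 1" using int_vac_queue[of K] Suc.prems by simp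
    then have "dep_level (K - int (vac_queue K - 1 - j)) = dep_level K - int (vac_queue K - 1 - j)" by (rule dep_level_back)
    moreover have "K - int (vac_queue K - 1 - j) = m" unfolding m_def using Suc.prems by simp
    ultimately show ?thesis using int_vac_queue[of K] Suc.prems by simp
  qed
  have dpm: "departure m = next_any_epoch t" unfolding departure_def sgm nSt ..
  have ze: "ze (a K) (vac_queue K) (vac_residual K) j = next_epoch (server_of (next_any_epoch t)) (next_any_epoch t)"
    unfolding zend_def zs vac_zcust Vs_idx_eq m_def[symmetric] dpm by simp
  have "mset (zf (a K) (vac_queue K) (vac_residual K) (Suc j)) = add_mset (ze (a K) (vac_queue K) (vac_residual K) j) (mset (zf (a K) (vac_queue K) (vac_residual K) j) - {#next_any_epoch t#})"
    unfolding zf_Suc using mset_tl[OF zf_ne] hd by simp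
  also have "\<dots> = mset (map (\<lambda>i. next_epoch (i+1) (next_any_epoch t)) [0..<c])" unfolding ze IH mset_next_epochs_step ..
  moreover have "epochs (a K) + int j + 1 = epochs (a K) + int (Suc j)" by simp
  ultimately show ?case unfolding nSt by (simp only:)
qed

lemma vac_workload_eq_Wv: "workload_vec c (a K) (zf (a K) (vac_queue K) (vac_residual K) (vac_queue K - 1)) = Wv c T0 T (idx K)"
proof -
  define t where "t = epoch_with (epochs (a K) + int (vac_queue K - 1))"
  have ms: "mset (zf (a K) (vac_queue K) (vac_residual K) (vac_queue K - 1)) = mset (map (\<lambda>i. next_epoch (i+1) t) [0..<c])"
    unfolding t_def by (rule vac_free_mset) (use vac_queue_pos[of K] in simp)
  have St: "epochs t = epochs (a K) + int (vac_queue K - 1)" unfolding t_def using epoch_with_spec by simp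
  have "departure K = next_any_epoch t" unfolding departure_def next_any_epoch_eq St using int_vac_queue[of K] vac_queue_pos[of K] by simp
  then have "map (\<lambda>j. next_epoch_from (j+1) (departure K)) [0..<c] = map (\<lambda>i. next_epoch (i+1) t) [0..<c]"
    by (intro map_cong[OF refl]) (simp add: next_epoch_from_next_any)
  then have "mset (free_after K) = mset (zf (a K) (vac_queue K) (vac_residual K) (vac_queue K - 1))" unfolding ms free_after_def mset_sort by (simp only:)
  then show ?thesis unfolding Wv_eq_workload_free_after by (rule workload_vec_mset_cong[symmetric])
qed

lemma vac_schedule:
  "zcust T0 (a K) (vac_queue K) (vac_queue K - 1 + i) = idx (K + int i)"
  "zarr T0 (a K) (vac_queue K) (vac_queue K - 1 + i) = a (K + int i)"
proof -
  have e: "K - int (vac_queue K) + 1 + int (vac_queue K - 1 + i) = K + int i" using vac_queue_pos[of K] by simp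
  show "zcust T0 (a K) (vac_queue K) (vac_queue K - 1 + i) = idx (K + int i)" unfolding vac_zcust e ..
  show "zarr T0 (a K) (vac_queue K) (vac_queue K - 1 + i) = a (K + int i)" unfolding vac_zarr e by simp
qed

lemma zero_start_from:
  assumes lo: "a (K - 1) < u" and hi: "u \<le> a K" and KN: "K \<le> N"
  shows "\<forall>i. zcust T0 u 0 (nat (N - K) + i) = idx (N + int i)"
    and "\<forall>i. zarr T0 u 0 (nat (N - K) + i) = a (N + int i)"
    and "workload_vec c (a N) (zf u 0 zerov (nat (N - K))) = Wseq c T0 T (idx K) zerov (nat (N - K))"
proof -
  have shift: "K + int (nat (N - K) + i) = N + int i" for i using KN by simp
  show "\<forall>i. zcust T0 u 0 (nat (N - K) + i) = idx (N + int i)"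
    using zero_start_schedule(1)[OF lo hi] shift by simp
  show "\<forall>i. zarr T0 u 0 (nat (N - K) + i) = a (N + int i)"
    using zero_start_schedule(2)[OF lo hi] shift by simp
  have "workload_vec c (a (K + int (nat (N - K)))) (zf u 0 zerov (0 + nat (N - K)))
      = Wseq c T0 T (idx K) (workload_vec c (a K) (zf u 0 zerov 0)) (nat (N - K))"
    by (rule workload_free_times_Wseq) (use zero_start_schedule(1,2)[OF lo hi] in simp_all)
  then show "workload_vec c (a N) (zf u 0 zerov (nat (N - K))) = Wseq c T0 T (idx K) zerov (nat (N - K))"
    using zero_start_schedule(3)[OF lo hi] KN by simp
qed

lemma vac_start_from:
  assumes KN: "K \<le> N"
  defines "j \<equiv> vac_queue K - 1 + nat (N - K)"
  shows "\<forall>i. zcust T0 (a K) (vac_queue K) (j + i) = idx (N + int i)"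
    and "\<forall>i. zarr T0 (a K) (vac_queue K) (j + i) = a (N + int i)"
    and "workload_vec c (a N) (zf (a K) (vac_queue K) (vac_residual K) j)
          = Wseq c T0 T (idx K) (Wv c T0 T (idx K)) (nat (N - K))"
proof -
  have shift: "K + int (nat (N - K) + i) = N + int i" for i using KN by simp
  show "\<forall>i. zcust T0 (a K) (vac_queue K) (j + i) = idx (N + int i)"
    using vac_schedule(1)[of K "nat (N - K) + _"] shift unfolding j_def by (simp add: add.assoc)
  show "\<forall>i. zarr T0 (a K) (vac_queue K) (j + i) = a (N + int i)"
    using vac_schedule(2)[of K "nat (N - K) + _"] shift unfolding j_def by (simp add: add.assoc)
  have "workload_vec c (a (K + int (nat (N - K)))) (zf (a K) (vac_queue K) (vac_residual K) (vac_queue K - 1 + nat (N - K)))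
      = Wseq c T0 T (idx K) (workload_vec c (a K) (zf (a K) (vac_queue K) (vac_residual K) (vac_queue K - 1))) (nat (N - K))"
    by (rule workload_free_times_Wseq) (use vac_schedule in simp_all)
  then show "workload_vec c (a N) (zf (a K) (vac_queue K) (vac_residual K) j)
      = Wseq c T0 T (idx K) (Wv c T0 T (idx K)) (nat (N - K))"
    using vac_workload_eq_Wv KN unfolding j_def by simp
qed

lemma Zu_coupled:
  assumes cust1: "\<forall>i. zcust T0 u1 q1 (j1 + i) = idx (N + int i)"
    and arr1: "\<forall>i. zarr T0 u1 q1 (j1 + i) = a (N + int i)"
    and cust2: "\<forall>i. zcust T0 u2 q2 (j2 + i) = idx (N + int i)"
    and arr2: "\<forall>i. zarr T0 u2 q2 (j2 + i) = a (N + int i)"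
    and W: "workload_vec c (a N) (zf u1 q1 r1 j1) = workload_vec c (a N) (zf u2 q2 r2 j2)"
    and x: "a N + workload_vec c (a N) (zf u1 q1 r1 j1) 0 \<le> x"
    and e: "since_arrival u1 ea x = since_arrival u2 eb x"
  shows "Zu c T0 T u1 (x - u1) (q1, r1, ea) = Zu c T0 T u2 (x - u2) (q2, r2, eb)"
proof -
  have W0: "0 \<le> workload_vec c (a N) (zf u1 q1 r1 j1) 0"
    using workload_vec_nonneg[of "zf u1 q1 r1 j1" c] zf_length_sorted c_pos by auto
  have start: "zs u1 q1 r1 j1 \<le> x"
    using zs_eq_workload[of u1 q1 r1 j1] arr1[rule_format, of 0] x by simp
  have "map (max (a N)) (zf u1 q1 r1 j1) = map (max (a N)) (zf u2 q2 r2 j2)"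
    by (rule workload_vec_eq_map_max) (use zf_length_sorted W in auto)
  then have "waiting u1 q1 r1 x = waiting u2 q2 r2 x \<and> residuals u1 q1 r1 x = residuals u2 q2 r2 x"
    by (intro coupled_state[where al = "a N"]) (use cust1 cust2 arr1 arr2 x W0 start in auto)
  then show ?thesis unfolding Zu_unfold using e by simp
qed

lemma vac_coupled_with_empty:
  assumes KN: "K \<le> N"
    and couple: "Wseq c T0 T (idx K) (Wv c T0 T (idx K)) (nat (N - K)) = Wseq c T0 T (idx K) zerov (nat (N - K))"
    and t: "a N + Wseq c T0 T (idx K) (Wv c T0 T (idx K)) (nat (N - K)) 0 \<le> t"
  shows "Zu c T0 T (a K) (t - a K) (vac_queue K, vac_residual K, 0) = Zu c T0 T (a K) (t - a K) (0, zerov, 0)"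
proof -
  have lo: "a (K - 1) < a K" by simp
  show ?thesis
    by (rule Zu_coupled[OF vac_start_from(1,2)[OF KN] zero_start_from(1,2)[OF lo order_refl KN]])
      (use vac_start_from(3)[OF KN] zero_start_from(3)[OF lo order_refl KN] couple t in simp_all)
qed

lemma empty_start_coupled:
  assumes KN: "K \<le> N" and u: "u \<le> a K"
    and couple: "Wseq c T0 T (idx K) (Wv c T0 T (idx K)) (nat (N - K)) = Wseq c T0 T (idx K) zerov (nat (N - K))"
    and t: "a N + Wseq c T0 T (idx K) (Wv c T0 T (idx K)) (nat (N - K)) 0 \<le> t"
  shows "Zu c T0 T u (t - u) (0, zerov, u - Sup {T0 n | n. n \<noteq> 0 \<and> T0 n \<le> u})
       = Zu c T0 T (a K) (t - a K) (0, zerov, 0)"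
proof -
  obtain K' where K': "K' \<le> K" "a (K' - 1) < u" "u \<le> a K'" using arrival_bracket[OF u] by blast
  have lo: "a (K - 1) < a K" by simp
  have W: "Wseq c T0 T (idx K') zerov (nat (N - K')) = Wseq c T0 T (idx K) zerov (nat (N - K))"
    by (rule Wseq_zero_coupled[OF K'(1) KN couple])
  have W0: "0 \<le> Wseq c T0 T (idx K) (Wv c T0 T (idx K)) (nat (N - K)) 0"
    using Wseq_nonneg[where c = c and w = "Wv c T0 T (idx K)"] Wv_nonneg c_pos by auto
  have "a K \<le> a N" using KN by simp
  then have "a K \<le> t" "u \<le> t" using t W0 u by linarith+
  then have e: "since_arrival u (u - Sup {T0 n | n. n \<noteq> 0 \<and> T0 n \<le> u}) t = since_arrival (a K) 0 t"
    using since_arrival_eq since_arrival_zero by (simp add: Sup_arrivals_le)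
  show ?thesis
    by (rule Zu_coupled[OF zero_start_from(1,2)[OF K'(2,3)] zero_start_from(1,2)[OF lo order_refl KN]])
      (use zero_start_from(3)[OF K'(2,3)] zero_start_from(3)[OF lo order_refl KN] K' KN W couple t e in simp_all)
qed

lemma Wk_coupling_persists:
  assumes k: "k \<le> -1" and kn: "k \<le> n" and n: "n \<le> -1"
    and couple: "Wk c T0 T k n (Wv c T0 T k) = Wk c T0 T k n zerov"
    and m: "n \<le> m" "m \<noteq> 0"
  shows "Wk c T0 T k m (Wv c T0 T k) = Wk c T0 T k m zerov \<and> Wlim c T0 T m = Wk c T0 T k m zerov"
proof -
  have Wk_Wseq: "Wk c T0 T k' m' w = Wseq c T0 T (idx k') w (nat (ordi m' - k'))" if "k' \<le> -1" for k' m' w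
    using that by (simp add: Wk_def idx_neg ordi_neg)
  have cpl: "Wseq c T0 T (idx k) (Wv c T0 T (idx k)) (nat (n - k)) = Wseq c T0 T (idx k) zerov (nat (n - k))"
    using couple k n by (simp add: Wk_Wseq idx_neg ordi_neg)
  have M: "n \<le> ordi m" using ordi_mono[of n m] m n by (simp add: ordi_neg)
  have "Wlim c T0 T m = Wk c T0 T k m zerov"
  proof (rule Wlim_eqI)
    fix k' assume "k' \<le> k"
    then show "Wk c T0 T k' m zerov = Wk c T0 T k m zerov"
      using Wseq_zero_stable[OF \<open>k' \<le> k\<close> kn M cpl] Wk_Wseq[of k'] Wk_Wseq[OF k] k by simp
  qed
  moreover have "Wk c T0 T k m (Wv c T0 T k) = Wk c T0 T k m zerov"
    using Wseq_coupled_after[OF kn M cpl] k by (simp add: Wk_Wseq idx_neg)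
  ultimately show ?thesis by simp
qed

lemma Zu_coupling_persists:
  assumes k: "k \<le> -1" and kn: "k \<le> n" and n: "n \<le> -1"
    and couple: "Wk c T0 T k n (Wv c T0 T k) = Wk c T0 T k n zerov"
    and t: "T0 n + Wk c T0 T k n (Wv c T0 T k) 0 \<le> t"
  shows "Zu c T0 T (T0 k) (t - T0 k) (Qv c T0 T (T0 k), vsort c (Uvec c T (T0 k)), 0)
           = Zu c T0 T (T0 k) (t - T0 k) (0, zerov, 0)"
    and "Zu c T0 T (T0 k) (t - T0 k) (0, zerov, 0) = Zlim c T0 T t"
proof -
  have kn_idx: "idx k = k" "ordi k = k" "idx n = n" "ordi n = n"
    using k n by (simp_all add: idx_neg ordi_neg)
  have T0k: "T0 k = a k" and T0n: "T0 n = a n" by (metis T0_idx kn_idx)+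
  have cpl: "Wseq c T0 T (idx k) (Wv c T0 T (idx k)) (nat (n - k)) = Wseq c T0 T (idx k) zerov (nat (n - k))"
    using couple by (simp add: Wk_def kn_idx)
  have t': "a n + Wseq c T0 T (idx k) (Wv c T0 T (idx k)) (nat (n - k)) 0 \<le> t"
    using t by (simp add: Wk_def kn_idx T0n)
  show "Zu c T0 T (T0 k) (t - T0 k) (Qv c T0 T (T0 k), vsort c (Uvec c T (T0 k)), 0)
      = Zu c T0 T (T0 k) (t - T0 k) (0, zerov, 0)"
    using vac_coupled_with_empty[OF kn cpl t'] by (simp add: T0k vac_queue_def vac_residual_def)
  show "Zu c T0 T (T0 k) (t - T0 k) (0, zerov, 0) = Zlim c T0 T t"
    by (rule Zlim_eqI[symmetric]) (use empty_start_coupled[OF kn _ cpl t'] in \<open>simp add: T0k\<close>)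
qed

end

theorem proposition2:
  fixes c :: nat and T0 :: "int \<Rightarrow> real" and T :: "nat \<Rightarrow> int \<Rightarrow> real"
    and k n :: int
  assumes c_pos: "c \<ge> 1"
    and arrivals: "point_seq T0"
    and servers: "\<forall>i\<in>{1..c}. point_seq (T i)"
    and no_ties_arr: "\<forall>i\<in>{1..c}. \<forall>m p. m \<noteq> 0 \<longrightarrow> p \<noteq> 0 \<longrightarrow> T0 m \<noteq> T i p"
    and no_ties_srv: "\<forall>i\<in>{1..c}. \<forall>j\<in>{1..c}. i \<noteq> j \<longrightarrow>
                        (\<forall>m p. m \<noteq> 0 \<longrightarrow> p \<noteq> 0 \<longrightarrow> T i m \<noteq> T j p)"
    and stable: "\<forall>t. bdd_above (qv_set c T0 T t)"
    and k_le: "k \<le> -1" and kn: "k \<le> n" and n_le: "n \<le> -1"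
    and couple: "Wk c T0 T k n (Wv c T0 T k) = Wk c T0 T k n zerov"
  shows "(\<forall>m. m \<ge> n \<longrightarrow> m \<noteq> 0 \<longrightarrow>
            Wk c T0 T k m (Wv c T0 T k) = Wlim c T0 T m \<and>
            Wlim c T0 T m = Wk c T0 T k m zerov) \<and>
         (\<forall>t. t \<ge> T0 n + Wk c T0 T k n (Wv c T0 T k) 0 \<longrightarrow>
            Zu c T0 T (T0 k) (t - T0 k)
               (Qv c T0 T (T0 k), vsort c (Uvec c T (T0 k)), 0)
              = Zu c T0 T (T0 k) (t - T0 k) (0, zerov, 0) \<and>
            Zu c T0 T (T0 k) (t - T0 k) (0, zerov, 0) = Zlim c T0 T t)"
proof -
  interpret queue_paths c T0 T
    by unfold_locales (use c_pos arrivals servers no_ties_arr no_ties_srv stable in auto)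
  show ?thesis
    using Wk_coupling_persists[OF k_le kn n_le couple] Zu_coupling_persists[OF k_le kn n_le couple]
    by auto
qed

end
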